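(* In the $L^p$ setting of the context (with $1<p<\infty$), suppose $G$ is amenable (the action $\{\alpha_g\}$ being arbitrary). Then for every finite set $F\subset G$ and every family $a_g\in A$, $g\in F$, $$\Big\|\sum_{g\in F}a_gT_g\Big\|_{L(D)}\le\Big\|\sum_{g\in F}\bar a_gV_g\Big\|_{L(H)},$$ i.e. the map $B(\bar A,V_g)\to B(A,T_g)$ determined by $\bar a\mapsto a$, $V_g\mapsto T_g$ is norm decreasing.
   Context: Setting: $(\Omega,\mu)$ is a measure space with $\sigma$-additive $\sigma$-finite measure $\mu$, $E$ a Banach space, $G$ a discrete group, $\{\alpha_g\}_{g\in G}$ a group of invertible measurable maps $\Omega\to\Omega$ ($\alpha_{gh}=\alpha_g\circ\alpha_h$, $\alpha_e=\mathrm{id}$) such that $\alpha_g$ and $\alpha_g^{-1}$ preserve $\mu$-null sets. $D=L^p_\mu(\Omega,E)$; $A=L^\infty_\mu(\Omega,L(E))$ acts on $D$ by $(af)(x)=a(x)f(x)$; $(T_gf)(x)=\rho_g(x)^{1/p}f(\alpha_g^{-1}(x))$, where $\rho_g$ is the Radon–Nikodym derivative of the measure $\Delta\mapsto\mu(\alpha_g^{-1}(\Delta))$ with respect to $\mu$ (so $T_g$ is an isometry and $T_gaT_g^{-1}=\hat T_g(a)$ with $\hat T_g(a)(x)=a(\alpha_g^{-1}(x))$). $B(A,T_g)$ is the closed subalgebra of $L(D)$ generated by $A$ and the $T_g$. Regular representation: $H=l^p(G,D)$; $(V_{g_0}\xi)(g)=\xi(gg_0)$; $(\bar a\xi)(g)=\hat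 T_g(a)\xi(g)$; $B(\bar A,V_g)$ is the closed subalgebra of $L(H)$ generated by $\bar A=\{\bar a:a\in A\}$ and the $V_g$. *)

theory Defs
  imports "HOL-Analysis.Analysis"
begin

definition amenable_group :: "'g::group_add itself \<Rightarrow> bool" where
  "amenable_group _ \<longleftrightarrow>
     (\<exists>m :: ('g \<Rightarrow> real) \<Rightarrow> real.
        (\<forall>f h. bounded (range f) \<longrightarrow> bounded (range h) \<longrightarrow> m (\<lambda>x. f x + h x) = m f + m h) \<and>
        (\<forall>f c. bounded (range f) \<longrightarrow> m (\<lambda>x. c * f x) = c * m f) \<and>
        (\<forall>f. bounded (range f) \<longrightarrow> (\<forall>x. 0 \<le> f x) \<longrightarrow> 0 \<le> m f) \<and>
        m (\<lambda>_. 1) = 1 \<and>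
        (\<forall>f s. bounded (range f) \<longrightarrow> m (\<lambda>x. f (s + x)) = m f))"

definition memLp :: "'x measure \<Rightarrow> real \<Rightarrow> ('x \<Rightarrow> 'e::real_normed_vector) \<Rightarrow> bool" where
  "memLp M p f \<longleftrightarrow> f \<in> borel_measurable M \<and> integrable M (\<lambda>x. norm (f x) powr p)"

definition Lp_norm :: "'x measure \<Rightarrow> real \<Rightarrow> ('x \<Rightarrow> 'e::real_normed_vector) \<Rightarrow> real" where
  "Lp_norm M p f = (\<integral>x. norm (f x) powr p \<partial>M) powr (1 / p)"

definition Lp_opnorm :: "'x measure \<Rightarrow> real \<Rightarrow> (('x \<Rightarrow> 'e::real_normed_vector) \<Rightarrow> ('x \<Rightarrow> 'e)) \<Rightarrow> real" where
  "Lp_opnorm M p Op = (SUP f \<in> {f. memLp M p f \<and> Lp_norm M p f \<le> 1}. Lp_norm M p (Op f))"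

definition Linfty :: "'x measure \<Rightarrow> ('x \<Rightarrow> 'b::real_normed_vector) \<Rightarrow> bool" where
  "Linfty M a \<longleftrightarrow> a \<in> borel_measurable M \<and> (\<exists>C. AE x in M. norm (a x) \<le> C)"

definition mem_lpD :: "'x measure \<Rightarrow> real \<Rightarrow> ('g \<Rightarrow> 'x \<Rightarrow> 'e::real_normed_vector) \<Rightarrow> bool" where
  "mem_lpD M p \<xi> \<longleftrightarrow> (\<forall>g. memLp M p (\<xi> g)) \<and> (\<lambda>g. Lp_norm M p (\<xi> g) powr p) summable_on UNIV"

definition lpD_norm :: "'x measure \<Rightarrow> real \<Rightarrow> ('g \<Rightarrow> 'x \<Rightarrow> 'e::real_normed_vector) \<Rightarrow> real" where
  "lpD_norm M p \<xi> = (\<Sum>\<^sub>\<infinity>g. Lp_norm M p (\<xi> g) powr p) powr (1 / p)"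

definition lpD_opnorm :: "'x measure \<Rightarrow> real \<Rightarrow>
    (('g \<Rightarrow> 'x \<Rightarrow> 'e::real_normed_vector) \<Rightarrow> ('g \<Rightarrow> 'x \<Rightarrow> 'e)) \<Rightarrow> real" where
  "lpD_opnorm M p Op = (SUP \<xi> \<in> {\<xi>. mem_lpD M p \<xi> \<and> lpD_norm M p \<xi> \<le> 1}. lpD_norm M p (Op \<xi>))"

definition rho :: "'x measure \<Rightarrow> ('g \<Rightarrow> 'x \<Rightarrow> 'x) \<Rightarrow> 'g \<Rightarrow> 'x \<Rightarrow> real" where
  "rho M \<alpha> g x = enn2real (RN_deriv M (distr M M (\<alpha> g)) x)"

definition Top :: "'x measure \<Rightarrow> real \<Rightarrow> ('g::group_add \<Rightarrow> 'x \<Rightarrow> 'x) \<Rightarrow> 'g \<Rightarrow>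
    ('x \<Rightarrow> 'e::real_normed_vector) \<Rightarrow> 'x \<Rightarrow> 'e" where
  "Top M p \<alpha> g f = (\<lambda>x. rho M \<alpha> g x powr (1 / p) *\<^sub>R f (\<alpha> (- g) x))"

definition Mop :: "('x \<Rightarrow> ('e::real_normed_vector \<Rightarrow>\<^sub>L 'e)) \<Rightarrow> ('x \<Rightarrow> 'e) \<Rightarrow> 'x \<Rightarrow> 'e" where
  "Mop a f = (\<lambda>x. blinfun_apply (a x) (f x))"

definition Vop :: "'g::group_add \<Rightarrow> ('g \<Rightarrow> 'x \<Rightarrow> 'e) \<Rightarrow> 'g \<Rightarrow> 'x \<Rightarrow> 'e" where
  "Vop g0 \<xi> = (\<lambda>g. \<xi> (g + g0))"

definition bar_op :: "('g::group_add \<Rightarrow> 'x \<Rightarrow> 'x) \<Rightarrow> ('x \<Rightarrow> ('e::real_normed_vector \<Rightarrow>\<^sub>L 'e)) \<Rightarrow>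
    ('g \<Rightarrow> 'x \<Rightarrow> 'e) \<Rightarrow> 'g \<Rightarrow> 'x \<Rightarrow> 'e" where
  "bar_op \<alpha> a \<xi> = (\<lambda>g. Mop (\<lambda>x. a (\<alpha> (- g) x)) (\<xi> g))"

end

theory Submission
  imports Defs
begin

text \<open>For f in the unit ball of L^p and a finite nonempty S in G, the vector
  xi(k) = |S|^(-1/p) T_k f for k in S, xi(k) = 0 otherwise, lies in the unit ball of l^p(G, D).
  The cocycle identity rho_(h+g) = rho_h (rho_g o alpha_(-h)) of the Radon-Nikodym derivatives
  says T_(h+g) = T_h T_g, hence (sum_g abar_g V_g xi)(h) = |S|^(-1/p) T_h (sum_g a_g T_g f)
  whenever h + F is contained in S. Since T_h is an isometry, the p-th power of the norm of
  sum_g abar_g V_g xi is at least the proportion of such h in S times the p-th power of the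
  norm of sum_g a_g T_g f, and amenability provides Folner sets S for which this proportion
  is arbitrarily close to 1.

  Folner sets come from the invariant mean in two steps: finite-dimensional separation and
  compactness give Reiter's condition (finitely supported probability vectors that are almost
  invariant under right translation by F), and Namioka's layer-cake trick turns an almost
  invariant probability vector into an almost invariant finite set.\<close>

section \<open>Folner sets of amenable groups\<close>

lemma bounded_range_sum:
  fixes f :: "'i \<Rightarrow> 'a \<Rightarrow> 'b::real_normed_vector"
  assumes "finite I" "\<And>i. i \<in> I \<Longrightarrow> bounded (range (f i))"
  shows "bounded (range (\<lambda>x. \<Sum>i\<in>I. f i x))"
  using assms by (induction I rule: finite_induct) (auto intro: bounded_plus_comp)

locale right_invariant_mean =
  fixes m :: "('g::group_add \<Rightarrow> real) \<Rightarrow> real"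
  assumes add: "bounded (range f) \<Longrightarrow> bounded (range h) \<Longrightarrow> m (\<lambda>x. f x + h x) = m f + m h"
    and scale: "bounded (range f) \<Longrightarrow> m (\<lambda>x. c * f x) = c * m f"
    and nonneg: "bounded (range f) \<Longrightarrow> (\<And>x. 0 \<le> f x) \<Longrightarrow> 0 \<le> m f"
    and const_one: "m (\<lambda>_. 1) = 1"
    and right_invariant: "bounded (range f) \<Longrightarrow> m (\<lambda>x. f (x + s)) = m f"
begin

lemma const: "m (\<lambda>_. c) = c"
  using scale[of "\<lambda>_. 1" c] const_one by simp

lemma diff:
  assumes "bounded (range f)" "bounded (range h)"
  shows "m (\<lambda>x. f x - h x) = m f - m h"
proof -
  have "m (\<lambda>x. f x + - h x) = m f + m (\<lambda>x. - h x)"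
    using assms by (intro add) simp_all
  then show ?thesis
    using scale[OF assms(2), of "- 1"] by simp
qed

lemma sum:
  assumes "finite I" "\<And>i. i \<in> I \<Longrightarrow> bounded (range (f i))"
  shows "m (\<lambda>x. \<Sum>i\<in>I. f i x) = (\<Sum>i\<in>I. m (f i))"
  using assms
proof (induction I rule: finite_induct)
  case empty
  then show ?case by (simp add: const)
next
  case (insert i I)
  have "m (\<lambda>x. f i x + (\<Sum>i\<in>I. f i x)) = m (f i) + m (\<lambda>x. \<Sum>i\<in>I. f i x)"
    using insert.prems by (intro add bounded_range_sum insert.hyps) auto
  moreover have "m (\<lambda>x. \<Sum>i\<in>I. f i x) = (\<Sum>i\<in>I. m (f i))"
    using insert.prems by (intro insert.IH) auto
  ultimately show ?case
    using insert.hyps by simp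
qed

lemma mono:
  assumes "bounded (range f)" "bounded (range h)" "\<And>x. f x \<le> h x"
  shows "m f \<le> m h"
proof -
  have "0 \<le> m (\<lambda>x. h x - f x)"
    using assms by (intro nonneg bounded_minus_comp) auto
  then show ?thesis
    using diff[OF assms(2,1)] by simp
qed

end

lemma amenable_group_right_invariant_mean:
  assumes "amenable_group TYPE('g)"
  obtains m :: "('g::group_add \<Rightarrow> real) \<Rightarrow> real" where "right_invariant_mean m"
proof -
  obtain m0 :: "('g \<Rightarrow> real) \<Rightarrow> real" where m0:
    "(\<forall>f h. bounded (range f) \<longrightarrow> bounded (range h) \<longrightarrow> m0 (\<lambda>x. f x + h x) = m0 f + m0 h) \<and>
     (\<forall>f c. bounded (range f) \<longrightarrow> m0 (\<lambda>x. c * f x) = c * m0 f) \<and>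
     (\<forall>f. bounded (range f) \<longrightarrow> (\<forall>x. 0 \<le> f x) \<longrightarrow> 0 \<le> m0 f) \<and>
     m0 (\<lambda>_. 1) = 1 \<and>
     (\<forall>f s. bounded (range f) \<longrightarrow> m0 (\<lambda>x. f (s + x)) = m0 f)"
    using assms unfolding amenable_group_def by (elim exE) (rule that)
  then have left_invariant: "\<And>f s. bounded (range f) \<Longrightarrow> m0 (\<lambda>x. f (s + x)) = m0 f"
    by blast
  have reflect: "bounded (range (\<lambda>x. f (- x)))" if "bounded (range f)" for f :: "'g \<Rightarrow> real"
    by (rule bounded_subset[OF that]) auto
  have "right_invariant_mean (\<lambda>f. m0 (\<lambda>x. f (- x)))"
  proof
    show "m0 (\<lambda>x. f (- x + s)) = m0 (\<lambda>x. f (- x))" if "bounded (range f)" for f s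
      using left_invariant[OF reflect[OF that], of "- s"] by (simp add: minus_add)
  qed (use m0 reflect in simp_all)
  then show ?thesis ..
qed

text \<open>right_diff_adjoint F is the formal adjoint of right_diff on F x G: pairing u with
  right_diff phi gives the sum of phi y * right_diff_adjoint F u y over y. For phi supported
  in Y, right_diff phi vanishes outside F x diff_support F Y.\<close>
definition right_diff :: "('g::group_add \<Rightarrow> real) \<Rightarrow> 'g \<times> 'g \<Rightarrow> real" where
  "right_diff \<phi> d = \<phi> (snd d + fst d) - \<phi> (snd d)"

definition right_diff_adjoint :: "'g::group_add set \<Rightarrow> ('g \<times> 'g \<Rightarrow> real) \<Rightarrow> 'g \<Rightarrow> real" where
  "right_diff_adjoint F u y = (\<Sum>g\<in>F. u (g, y - g) - u (g, y))"

definition right_diff_norm :: "'g::group_add set \<Rightarrow> 'g set \<Rightarrow> ('g \<Rightarrow> real) \<Rightarrow> real" where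
  "right_diff_norm F W \<phi> = (\<Sum>d\<in>F \<times> W. \<bar>right_diff \<phi> d\<bar>)"

definition diff_support :: "'g::group_add set \<Rightarrow> 'g set \<Rightarrow> 'g set" where
  "diff_support F Y = Y \<union> (\<lambda>(y, g). y - g) ` (Y \<times> F)"

definition prob_weights :: "'a set \<Rightarrow> ('a \<Rightarrow> real) set" where
  "prob_weights Y = {\<phi>. (\<forall>x. 0 \<le> \<phi> x) \<and> (\<forall>x. x \<notin> Y \<longrightarrow> \<phi> x = 0) \<and> sum \<phi> Y = 1}"

lemma (in right_invariant_mean) right_diff_adjoint_mean:
  assumes "finite F" "bounded (range u)"
  shows "m (right_diff_adjoint F u) = 0"
proof -
  have shifted: "bounded (range (\<lambda>x. u (g, x + s)))" for g s
    by (rule bounded_subset[OF assms(2)]) auto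
  have "m (right_diff_adjoint F u) = (\<Sum>g\<in>F. m (\<lambda>x. u (g, x - g)) - m (\<lambda>x. u (g, x)))"
    unfolding right_diff_adjoint_def
    using shifted[of _ "- _"] shifted[of _ 0] assms(1)
    by (simp add: sum bounded_minus_comp diff)
  also have "\<dots> = 0"
  proof (intro sum.neutral ballI)
    fix g
    have "m (\<lambda>x. u (g, x + - g)) = m (\<lambda>x. u (g, x))"
      using right_invariant[OF shifted[of g 0], of "- g"] by simp
    then show "m (\<lambda>x. u (g, x - g)) - m (\<lambda>x. u (g, x)) = 0"
      by simp
  qed
  finally show ?thesis .
qed

lemma amenable_right_diff_adjoint_not_uniformly_positive:
  assumes "amenable_group TYPE('g)" "finite F" "bounded (range u)" "0 < r"
  shows "\<exists>y::'g::group_add. right_diff_adjoint F u y < r"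
proof (rule ccontr)
  assume "\<not> ?thesis"
  then have "\<And>y. r \<le> right_diff_adjoint F u y"
    by (simp add: not_less)
  obtain m :: "('g \<Rightarrow> real) \<Rightarrow> real" where "right_invariant_mean m"
    using amenable_group_right_invariant_mean[OF assms(1)] .
  then interpret right_invariant_mean m .
  have "bounded (range (\<lambda>x. u (g, x - g) - u (g, x)))" for g
    by (intro bounded_minus_comp; rule bounded_subset[OF assms(3)]) auto
  then have "bounded (range (right_diff_adjoint F u))"
    unfolding right_diff_adjoint_def using assms(2) by (intro bounded_range_sum)
  then have "m (\<lambda>_. r) \<le> m (right_diff_adjoint F u)"
    using \<open>\<And>y. r \<le> right_diff_adjoint F u y\<close> by (intro mono) auto
  then show False
    using right_diff_adjoint_mean[OF assms(2,3)] const \<open>0 < r\<close> by simp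
qed

lemma sum_square_diff_le:
  fixes z w :: "'d \<Rightarrow> real"
  assumes "\<And>d. d \<in> D \<Longrightarrow> \<bar>z d\<bar> \<le> B" "\<And>d. d \<in> D \<Longrightarrow> \<bar>w d\<bar> \<le> B"
  shows "(\<Sum>d\<in>D. (z d - w d) * (z d - w d)) \<le> real (card D) * (2 * B)\<^sup>2"
proof -
  have "(z d - w d) * (z d - w d) \<le> (2 * B)\<^sup>2" if "d \<in> D" for d
  proof -
    have "\<bar>z d - w d\<bar> \<le> 2 * B"
      using abs_triangle_ineq4[of "z d" "w d"] assms[OF that] by linarith
    from power_mono[OF this abs_ge_zero, of 2] show ?thesis
      by (simp add: power2_eq_square)
  qed
  then show ?thesis
    using sum_mono[of D "\<lambda>d. (z d - w d) * (z d - w d)" "\<lambda>_. (2 * B)\<^sup>2"] by simp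
qed

text \<open>A point of \<open>K\<close> of almost minimal Euclidean norm; convexity keeps the other points of \<open>K\<close>
  from lying far on the other side of the hyperplane through it.\<close>
lemma convex_away_from_zero_separating_point:
  fixes K :: "('d \<Rightarrow> real) set"
  assumes "K \<noteq> {}" "0 < \<gamma>"
    and convex: "\<And>z w s. z \<in> K \<Longrightarrow> w \<in> K \<Longrightarrow> 0 \<le> s \<Longrightarrow> s \<le> 1 \<Longrightarrow> (\<lambda>d. w d + s * (z d - w d)) \<in> K"
    and away: "\<And>z. z \<in> K \<Longrightarrow> \<gamma> \<le> (\<Sum>d\<in>D. z d * z d)"
    and bounded: "\<And>z d. z \<in> K \<Longrightarrow> d \<in> D \<Longrightarrow> \<bar>z d\<bar> \<le> B"
  obtains w where "w \<in> K" "\<And>z. z \<in> K \<Longrightarrow> \<gamma> / 2 \<le> (\<Sum>d\<in>D. w d * z d)"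
proof -
  define ip where "ip a b = (\<Sum>d\<in>D. a d * b d)" for a b :: "'d \<Rightarrow> real"
  define J where "J = (INF z\<in>K. ip z z)"
  have bdd: "bdd_below ((\<lambda>z. ip z z) ` K)"
    using away unfolding ip_def by (intro bdd_belowI[of _ \<gamma>]) auto
  have J_le: "J \<le> ip z z" if "z \<in> K" for z
    unfolding J_def using bdd that by (rule cINF_lower)
  define \<Lambda> where "\<Lambda> = real (card D) * (2 * B)\<^sup>2 + 1"
  have "0 < \<Lambda>"
    unfolding \<Lambda>_def by (simp add: add_nonneg_pos)
  have diam: "ip (\<lambda>d. z d - w d) (\<lambda>d. z d - w d) \<le> \<Lambda>" if "z \<in> K" "w \<in> K" for z w
    using sum_square_diff_le[of D z B w, OF bounded[OF that(1)] bounded[OF that(2)]]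
    unfolding ip_def \<Lambda>_def by simp
  define s where "s = min 1 (\<gamma> / (2 * \<Lambda>))"
  have "0 < s" "s \<le> 1" "s * \<Lambda> \<le> \<gamma> / 2"
    using \<open>0 < \<gamma>\<close> \<open>0 < \<Lambda>\<close> unfolding s_def by (auto simp: min_def field_simps)
  obtain w where "w \<in> K" and w_almost_min: "ip w w < J + s * \<gamma> / 2"
    using cINF_less_iff[OF \<open>K \<noteq> {}\<close> bdd, of "J + s * \<gamma> / 2"] \<open>0 < s\<close> \<open>0 < \<gamma>\<close> unfolding J_def by auto
  have "\<gamma> / 2 \<le> ip w z" if "z \<in> K" for z
  proof -
    define e where "e d = z d - w d" for d
    have "(\<lambda>d. w d + s * e d) \<in> K"
      unfolding e_def using convex[OF that \<open>w \<in> K\<close>] \<open>0 < s\<close> \<open>s \<le> 1\<close> by simp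
    then have "J \<le> ip (\<lambda>d. w d + s * e d) (\<lambda>d. w d + s * e d)"
      by (rule J_le)
    also have "\<dots> = ip w w + 2 * s * ip w e + s\<^sup>2 * ip e e"
      unfolding ip_def by (simp add: algebra_simps power2_eq_square sum.distrib sum_distrib_left)
    also have "\<dots> \<le> ip w w + 2 * s * ip w e + s\<^sup>2 * \<Lambda>"
      using diam[OF that \<open>w \<in> K\<close>] unfolding e_def by (simp add: mult_left_mono)
    finally have "s * (- \<gamma> / 2 - s * \<Lambda>) \<le> s * (2 * ip w e)"
      using w_almost_min by (simp add: algebra_simps power2_eq_square)
    then have "- \<gamma> \<le> 2 * ip w e"
      using \<open>0 < s\<close> \<open>s * \<Lambda> \<le> \<gamma> / 2\<close> by (simp add: mult_le_cancel_left_pos)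
    moreover have "ip w e = ip w z - ip w w"
      unfolding ip_def e_def by (simp add: sum_subtractf algebra_simps)
    moreover have "\<gamma> \<le> ip w w"
      using away[OF \<open>w \<in> K\<close>] unfolding ip_def .
    ultimately show ?thesis
      by linarith
  qed
  then show ?thesis
    using that \<open>w \<in> K\<close> unfolding ip_def by blast
qed

lemma prob_weights_le_one: "finite Y \<Longrightarrow> \<phi> \<in> prob_weights Y \<Longrightarrow> \<phi> x \<le> 1"
  unfolding prob_weights_def using member_le_sum[of x Y \<phi>] by (cases "x \<in> Y") auto

lemma indicator_singleton_prob_weights: "finite Y \<Longrightarrow> y \<in> Y \<Longrightarrow> indicator {y} \<in> prob_weights Y"
  unfolding prob_weights_def indicator_def by (auto simp: of_bool_def sum.delta)

lemma prob_weights_convex: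
  assumes "\<phi> \<in> prob_weights Y" "\<psi> \<in> prob_weights Y" "0 \<le> s" "s \<le> 1"
  shows "(\<lambda>x. (1 - s) * \<psi> x + s * \<phi> x) \<in> prob_weights Y"
  using assms unfolding prob_weights_def by (simp add: sum.distrib flip: sum_distrib_left)

lemma finite_diff_support: "finite F \<Longrightarrow> finite Y \<Longrightarrow> finite (diff_support F Y)"
  unfolding diff_support_def by auto

lemma right_diff_indicator_pairing:
  fixes F Y :: "'g::group_add set"
  assumes "finite F" "finite Y" "y \<in> Y"
  shows "(\<Sum>d\<in>F \<times> diff_support F Y. u d * right_diff (indicator {y}) d) = right_diff_adjoint F u y"
proof -
  have "(\<Sum>d\<in>F \<times> diff_support F Y. u d * right_diff (indicator {y}) d)
      = (\<Sum>g\<in>F. \<Sum>x\<in>diff_support F Y. u (g, x) * (indicator {y} (x + g) - indicator {y} x))"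
    unfolding right_diff_def by (simp add: sum.cartesian_product case_prod_beta)
  also have "\<dots> = right_diff_adjoint F u y"
    unfolding right_diff_adjoint_def
  proof (rule sum.cong[OF refl])
    fix g assume "g \<in> F"
    have "y - g \<in> diff_support F Y" "y \<in> diff_support F Y"
      using assms(3) \<open>g \<in> F\<close> unfolding diff_support_def by (auto intro!: image_eqI[of _ _ "(y, g)"])
    moreover have "u (g, x) * (indicator {y} (x + g) - indicator {y} x)
        = (if x = y - g then u (g, x) else 0) - (if x = y then u (g, x) else 0)" for x
      by (auto simp: eq_diff_eq)
    ultimately show "(\<Sum>x\<in>diff_support F Y. u (g, x) * (indicator {y} (x + g) - indicator {y} x))
        = u (g, y - g) - u (g, y)"
      using finite_diff_support[OF assms(1,2)] by (simp add: sum_subtractf sum.delta')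
  qed
  finally show ?thesis .
qed

definition perturbed_right_diffs :: "'g::group_add set \<Rightarrow> 'g set \<Rightarrow> real \<Rightarrow> ('g \<times> 'g \<Rightarrow> real) set" where
  "perturbed_right_diffs F Y r =
    {(\<lambda>d. right_diff \<phi> d - b d) | \<phi> b. \<phi> \<in> prob_weights Y \<and> (\<Sum>d\<in>F \<times> diff_support F Y. \<bar>b d\<bar>) \<le> r}"

lemma perturbed_right_diffs_convex:
  assumes "z \<in> perturbed_right_diffs F Y r" "w \<in> perturbed_right_diffs F Y r" "0 \<le> s" "s \<le> 1"
  shows "(\<lambda>d. w d + s * (z d - w d)) \<in> perturbed_right_diffs F Y r"
proof -
  define D where "D = F \<times> diff_support F Y"
  obtain \<phi>1 b1 where \<phi>1: "\<phi>1 \<in> prob_weights Y" "(\<Sum>d\<in>D. \<bar>b1 d\<bar>) \<le> r" and z: "z = (\<lambda>d. right_diff \<phi>1 d - b1 d)"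
    using assms(1) unfolding perturbed_right_diffs_def D_def by blast
  obtain \<phi>2 b2 where \<phi>2: "\<phi>2 \<in> prob_weights Y" "(\<Sum>d\<in>D. \<bar>b2 d\<bar>) \<le> r" and w: "w = (\<lambda>d. right_diff \<phi>2 d - b2 d)"
    using assms(2) unfolding perturbed_right_diffs_def D_def by blast
  define b where "b d = (1 - s) * b2 d + s * b1 d" for d
  have "(\<Sum>d\<in>D. \<bar>b d\<bar>) \<le> (\<Sum>d\<in>D. (1 - s) * \<bar>b2 d\<bar> + s * \<bar>b1 d\<bar>)"
  proof (rule sum_mono)
    fix d
    have "\<bar>b d\<bar> \<le> \<bar>(1 - s) * b2 d\<bar> + \<bar>s * b1 d\<bar>"
      unfolding b_def by (rule abs_triangle_ineq)
    then show "\<bar>b d\<bar> \<le> (1 - s) * \<bar>b2 d\<bar> + s * \<bar>b1 d\<bar>"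
      using assms(3,4) by (simp add: abs_mult)
  qed
  also have "\<dots> = (1 - s) * (\<Sum>d\<in>D. \<bar>b2 d\<bar>) + s * (\<Sum>d\<in>D. \<bar>b1 d\<bar>)"
    by (simp add: sum.distrib sum_distrib_left)
  also have "\<dots> \<le> (1 - s) * r + s * r"
    using \<phi>1(2) \<phi>2(2) assms(3,4) by (intro add_mono mult_left_mono) auto
  finally have "(\<Sum>d\<in>D. \<bar>b d\<bar>) \<le> r"
    by (simp add: algebra_simps)
  moreover have "(\<lambda>d. w d + s * (z d - w d)) = (\<lambda>d. right_diff (\<lambda>x. (1 - s) * \<phi>2 x + s * \<phi>1 x) d - b d)"
    unfolding z w b_def right_diff_def by (simp add: fun_eq_iff algebra_simps)
  ultimately show ?thesis
    using prob_weights_convex[OF \<phi>1(1) \<phi>2(1) assms(3,4)]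
    unfolding perturbed_right_diffs_def D_def by blast
qed

lemma perturbed_right_diffs_bounded:
  assumes "finite F" "finite Y" "z \<in> perturbed_right_diffs F Y r" "d \<in> F \<times> diff_support F Y"
  shows "\<bar>z d\<bar> \<le> 1 + r"
proof -
  obtain \<phi> b where \<phi>: "\<phi> \<in> prob_weights Y" and b: "(\<Sum>d\<in>F \<times> diff_support F Y. \<bar>b d\<bar>) \<le> r"
    and z: "z = (\<lambda>d. right_diff \<phi> d - b d)"
    using assms(3) unfolding perturbed_right_diffs_def by blast
  have bounds: "0 \<le> \<phi> x \<and> \<phi> x \<le> 1" for x
    using \<phi> prob_weights_le_one[OF assms(2) \<phi>] unfolding prob_weights_def by auto
  have "\<bar>right_diff \<phi> d\<bar> \<le> 1"
    unfolding right_diff_def abs_le_iff using bounds[of "snd d + fst d"] bounds[of "snd d"] by linarith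
  moreover have "\<bar>b d\<bar> \<le> (\<Sum>d\<in>F \<times> diff_support F Y. \<bar>b d\<bar>)"
    using assms(1,2,4) finite_diff_support by (intro member_le_sum) auto
  ultimately show ?thesis
    unfolding z using b abs_triangle_ineq4[of "right_diff \<phi> d" "b d"] by linarith
qed

lemma perturbed_right_diffs_l1_lower:
  assumes "\<And>\<phi>. \<phi> \<in> prob_weights Y \<Longrightarrow> 2 * r < right_diff_norm F (diff_support F Y) \<phi>"
    and "z \<in> perturbed_right_diffs F Y r"
  shows "r < (\<Sum>d\<in>F \<times> diff_support F Y. \<bar>z d\<bar>)"
proof -
  define D where "D = F \<times> diff_support F Y"
  obtain \<phi> b where \<phi>: "\<phi> \<in> prob_weights Y" and b: "(\<Sum>d\<in>D. \<bar>b d\<bar>) \<le> r"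
    and z: "z = (\<lambda>d. right_diff \<phi> d - b d)"
    using assms(2) unfolding perturbed_right_diffs_def D_def by blast
  have "right_diff_norm F (diff_support F Y) \<phi> \<le> (\<Sum>d\<in>D. \<bar>z d\<bar> + \<bar>b d\<bar>)"
    unfolding right_diff_norm_def D_def[symmetric] z by (intro sum_mono) linarith
  also have "\<dots> = (\<Sum>d\<in>D. \<bar>z d\<bar>) + (\<Sum>d\<in>D. \<bar>b d\<bar>)"
    by (simp add: sum.distrib)
  finally show ?thesis
    using assms(1)[OF \<phi>] b unfolding D_def by linarith
qed

lemma pairing_right_diff_ge_perturbed:
  assumes "finite F" "finite Y" "\<phi> \<in> prob_weights Y" "0 \<le> r" "d \<in> F \<times> diff_support F Y"
    and "\<And>z. z \<in> perturbed_right_diffs F Y r \<Longrightarrow> c \<le> (\<Sum>d\<in>F \<times> diff_support F Y. w d * z d)"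
  shows "c + r * \<bar>w d\<bar> \<le> (\<Sum>d\<in>F \<times> diff_support F Y. w d * right_diff \<phi> d)"
proof -
  define D where "D = F \<times> diff_support F Y"
  have "finite D"
    unfolding D_def using assms(1,2) by (simp add: finite_diff_support)
  have "c + \<sigma> * r * w d \<le> (\<Sum>d\<in>D. w d * right_diff \<phi> d)" if "\<bar>\<sigma>\<bar> = 1" for \<sigma>
  proof -
    define b where "b d' = (if d' = d then \<sigma> * r else 0)" for d'
    have "(\<Sum>d\<in>D. \<bar>b d\<bar>) = r"
      unfolding b_def using \<open>finite D\<close> assms(4,5) that
      by (simp add: D_def if_distrib abs_mult sum.delta cong: if_cong)
    then have "(\<lambda>d. right_diff \<phi> d - b d) \<in> perturbed_right_diffs F Y r"
      unfolding perturbed_right_diffs_def D_def using assms(3) by force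
    from assms(6)[OF this]
    have "c \<le> (\<Sum>d'\<in>D. w d' * right_diff \<phi> d') - (\<Sum>d'\<in>D. w d' * b d')"
      unfolding D_def by (simp add: right_diff_distrib sum_subtractf)
    moreover have "(\<Sum>d'\<in>D. w d' * b d') = \<sigma> * r * w d"
      unfolding b_def using \<open>finite D\<close> assms(5) by (simp add: D_def if_distrib sum.delta cong: if_cong)
    ultimately show ?thesis
      by simp
  qed
  from this[of 1] this[of "- 1"] show ?thesis
    unfolding D_def by (cases "0 \<le> w d") auto
qed

lemma separating_point_adjoint_witness:
  fixes F Y :: "'g::group_add set"
  assumes "finite F" "finite Y" "0 \<le> r" "0 \<le> c"
    and "d\<^sub>0 \<in> F \<times> diff_support F Y" "w d\<^sub>0 \<noteq> 0"
    and separating: "\<And>z. z \<in> perturbed_right_diffs F Y r \<Longrightarrow> c \<le> (\<Sum>d\<in>F \<times> diff_support F Y. w d * z d)"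
  obtains u where "\<And>z. \<bar>u z\<bar> \<le> 1" "\<And>y. y \<in> Y \<Longrightarrow> r \<le> right_diff_adjoint F u y"
proof -
  define D where "D = F \<times> diff_support F Y"
  have "finite D"
    unfolding D_def using assms(1,2) by (simp add: finite_diff_support)
  define \<mu> where "\<mu> = Max ((\<lambda>d. \<bar>w d\<bar>) ` D)"
  have "\<mu> \<in> (\<lambda>d. \<bar>w d\<bar>) ` D"
    unfolding \<mu>_def using \<open>finite D\<close> assms(5) by (intro Max_in) (auto simp: D_def)
  then obtain d\<^sub>1 where "d\<^sub>1 \<in> D" "\<mu> = \<bar>w d\<^sub>1\<bar>"
    by blast
  have w_le: "\<bar>w d\<bar> \<le> \<mu>" if "d \<in> D" for d
    unfolding \<mu>_def using \<open>finite D\<close> that by simp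
  have "\<bar>w d\<^sub>0\<bar> \<le> \<mu>"
    using w_le assms(5) unfolding D_def by blast
  then have "0 < \<mu>"
    using assms(6) by simp
  define u where "u d = (if d \<in> D then w d / \<mu> else 0)" for d
  have "\<bar>u z\<bar> \<le> 1" for z
    unfolding u_def using w_le \<open>0 < \<mu>\<close> by (auto simp: divide_le_eq_1)
  moreover have "r \<le> right_diff_adjoint F u y" if "y \<in> Y" for y
  proof -
    have "c + r * \<mu> \<le> (\<Sum>d\<in>D. w d * right_diff (indicator {y}) d)"
      unfolding \<open>\<mu> = \<bar>w d\<^sub>1\<bar>\<close> D_def
      using pairing_right_diff_ge_perturbed[OF assms(1,2) indicator_singleton_prob_weights[OF assms(2) that]
          assms(3) \<open>d\<^sub>1 \<in> D\<close>[unfolded D_def] separating] .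
    then have "r \<le> (\<Sum>d\<in>D. w d * right_diff (indicator {y}) d) / \<mu>"
      using \<open>0 < \<mu>\<close> assms(4) by (simp add: le_divide_eq)
    also have "\<dots> = (\<Sum>d\<in>D. u d * right_diff (indicator {y}) d)"
      unfolding u_def by (simp add: sum_divide_distrib)
    also have "\<dots> = right_diff_adjoint F u y"
      unfolding D_def by (rule right_diff_indicator_pairing[OF assms(1,2) that])
    finally show ?thesis .
  qed
  ultimately show ?thesis
    using that by blast
qed

text \<open>The finite-dimensional Hahn-Banach step. Because the l^1-ball of radius r is subtracted in
  perturbed_right_diffs, a point separating it from 0, divided by its sup-norm, pairs to at
  least r with every right_diff (indicator {y}).\<close>
lemma reiter_failure_adjoint_witness:
  fixes F Y :: "'g::group_add set"
  assumes "finite F" "finite Y" "Y \<noteq> {}" "0 < r"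
    and large: "\<And>\<phi>. \<phi> \<in> prob_weights Y \<Longrightarrow> 2 * r < right_diff_norm F (diff_support F Y) \<phi>"
  obtains u where "\<And>z. \<bar>u z\<bar> \<le> 1" "\<And>y. y \<in> Y \<Longrightarrow> r \<le> right_diff_adjoint F u y"
proof -
  define D where "D = F \<times> diff_support F Y"
  define K where "K = perturbed_right_diffs F Y r"
  have "finite D"
    unfolding D_def using assms(1,2) by (simp add: finite_diff_support)
  obtain y\<^sub>0 where "y\<^sub>0 \<in> Y"
    using assms(3) by blast
  then have "(\<lambda>d. right_diff (indicator {y\<^sub>0}) d - 0) \<in> K"
    unfolding K_def perturbed_right_diffs_def
    using indicator_singleton_prob_weights[OF assms(2)] \<open>0 < r\<close> by force
  then have "K \<noteq> {}"
    by blast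
  have l1: "r < (\<Sum>d\<in>D. \<bar>z d\<bar>)" if "z \<in> K" for z
    using perturbed_right_diffs_l1_lower[OF large] that unfolding K_def D_def by blast
  then have "D \<noteq> {}"
    using \<open>K \<noteq> {}\<close> \<open>0 < r\<close> by force
  define \<gamma> where "\<gamma> = r\<^sup>2 / real (card D)"
  have "0 < \<gamma>"
    unfolding \<gamma>_def using \<open>0 < r\<close> \<open>finite D\<close> \<open>D \<noteq> {}\<close> by (simp add: card_gt_0_iff)
  have away: "\<gamma> \<le> (\<Sum>d\<in>D. z d * z d)" if "z \<in> K" for z
  proof -
    have "r\<^sup>2 \<le> (\<Sum>d\<in>D. \<bar>z d\<bar>)\<^sup>2"
      using l1[OF that] \<open>0 < r\<close> by (intro power_mono) auto
    also have "\<dots> \<le> (\<Sum>d\<in>D. z d * z d) * real (card D)"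
      using Cauchy_Schwarz_ineq_sum[of "\<lambda>d. \<bar>z d\<bar>" "\<lambda>_. 1" D] by (simp add: power2_eq_square)
    finally show ?thesis
      unfolding \<gamma>_def using \<open>finite D\<close> \<open>D \<noteq> {}\<close> by (simp add: divide_le_eq card_gt_0_iff)
  qed
  have convex: "(\<lambda>d. w d + s * (z d - w d)) \<in> K"
    if "z \<in> K" "w \<in> K" "0 \<le> s" "s \<le> 1" for z w s
    using perturbed_right_diffs_convex that unfolding K_def by blast
  have bounded: "\<bar>z d\<bar> \<le> 1 + r" if "z \<in> K" "d \<in> D" for z d
    using perturbed_right_diffs_bounded[OF assms(1,2)] that unfolding K_def D_def by blast
  obtain w where "w \<in> K" and separating: "\<And>z. z \<in> K \<Longrightarrow> \<gamma> / 2 \<le> (\<Sum>d\<in>D. w d * z d)"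
    using convex_away_from_zero_separating_point[of K \<gamma> D "1 + r"] \<open>K \<noteq> {}\<close> \<open>0 < \<gamma>\<close> convex away bounded
    by blast
  have "(\<Sum>d\<in>D. w d * w d) \<noteq> 0"
    using away[OF \<open>w \<in> K\<close>] \<open>0 < \<gamma>\<close> by linarith
  then obtain d\<^sub>0 where "d\<^sub>0 \<in> D" "w d\<^sub>0 * w d\<^sub>0 \<noteq> 0"
    by (rule sum.not_neutral_contains_not_neutral)
  then have "d\<^sub>0 \<in> F \<times> diff_support F Y" "w d\<^sub>0 \<noteq> 0"
    unfolding D_def by simp_all
  moreover have "0 \<le> r" "0 \<le> \<gamma> / 2"
    using \<open>0 < r\<close> \<open>0 < \<gamma>\<close> by simp_all
  moreover have "\<gamma> / 2 \<le> (\<Sum>d\<in>F \<times> diff_support F Y. w d * z d)" if "z \<in> perturbed_right_diffs F Y r" for z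
    using separating that unfolding K_def D_def by blast
  ultimately show ?thesis
    using separating_point_adjoint_witness[OF assms(1,2)] that by blast
qed

lemma compact_unit_cube: "compact {u :: 'a \<Rightarrow> real. \<forall>z. u z \<in> {-1..1}}"
proof -
  have "compactin (product_topology (\<lambda>_. euclidean) UNIV) (PiE UNIV (\<lambda>_::'a. {-1..1::real}))"
    by (simp add: compactin_PiE)
  moreover have "PiE UNIV (\<lambda>_::'a. {-1..1::real}) = {u. \<forall>z. u z \<in> {-1..1}}"
    by (auto simp: PiE_UNIV_domain)
  ultimately show ?thesis
    by (simp add: euclidean_product_topology)
qed

lemma closed_right_diff_adjoint_ge: "closed {u. r \<le> right_diff_adjoint F u y}"
  unfolding right_diff_adjoint_def
  by (intro closed_Collect_le continuous_intros continuous_on_product_coordinates)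

text \<open>If Reiter's condition failed, the witnesses of \<open>reiter_failure_adjoint_witness\<close> for
  all finite \<open>Y\<close> would have the finite intersection property in the compact cube; a common
  witness for all of \<open>G\<close> is ruled out by the invariant mean.\<close>
lemma amenable_reiter:
  fixes F :: "'g::group_add set"
  assumes "amenable_group TYPE('g)" "finite F" "0 < e"
  obtains Y \<phi> where "finite Y" "Y \<noteq> {}" "\<phi> \<in> prob_weights Y"
    "right_diff_norm F (diff_support F Y) \<phi> \<le> e"
proof (rule ccontr)
  assume "\<not> thesis"
  define r where "r = e / 2"
  have "0 < r"
    using assms(3) unfolding r_def by simp
  from \<open>\<not> thesis\<close> that have large: "2 * r < right_diff_norm F (diff_support F Y) \<phi>"
    if "finite Y" "Y \<noteq> {}" "\<phi> \<in> prob_weights Y" for Y \<phi>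
    using \<open>finite Y\<close> \<open>Y \<noteq> {}\<close> \<open>\<phi> \<in> prob_weights Y\<close> unfolding r_def by force
  define U where "U = {u :: 'g \<times> 'g \<Rightarrow> real. \<forall>z. u z \<in> {-1..1}}"
  define C where "C y = {u. r \<le> right_diff_adjoint F u y}" for y
  have "U \<inter> \<Inter>(range C) \<noteq> {}"
  proof (rule compact_fip[THEN iffD1, rule_format])
    show "compact U"
      unfolding U_def by (rule compact_unit_cube)
    show "closed B" if "B \<in> range C" for B
      using that closed_right_diff_adjoint_ge unfolding C_def by blast
    fix B assume "B \<subseteq> range C" "finite B"
    then obtain Y' where "finite Y'" "B = C ` Y'"
      using finite_subset_image by metis
    moreover have "finite (insert 0 Y')"
      using \<open>finite Y'\<close> by simp
    then obtain u where "\<And>z. \<bar>u z\<bar> \<le> 1" "\<And>y. y \<in> insert 0 Y' \<Longrightarrow> r \<le> right_diff_adjoint F u y"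
      using reiter_failure_adjoint_witness[OF assms(2) _ insert_not_empty \<open>0 < r\<close> large] by blast
    ultimately have "u \<in> U \<inter> \<Inter>B"
      unfolding U_def C_def by (auto simp: abs_le_iff)
    then show "U \<inter> \<Inter>B \<noteq> {}"
      by blast
  qed
  then obtain u where "\<forall>z. \<bar>u z\<bar> \<le> 1" "\<And>y. r \<le> right_diff_adjoint F u y"
    unfolding U_def C_def by (auto simp: abs_le_iff)
  moreover have "bounded (range u)"
    using \<open>\<forall>z. \<bar>u z\<bar> \<le> 1\<close> unfolding bounded_iff by auto
  ultimately show False
    using amenable_right_diff_adjoint_not_uniformly_positive[OF assms(1,2) _ \<open>0 < r\<close>] not_le by blast
qed

lemma right_diff_norm_peel_indicator:
  fixes \<psi> :: "'g::group_add \<Rightarrow> real"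
  assumes "\<And>x. x \<in> P \<Longrightarrow> t \<le> \<psi> x" "\<And>x. x \<notin> P \<Longrightarrow> \<psi> x = 0" "0 \<le> t"
  shows "right_diff_norm F W \<psi>
    = t * right_diff_norm F W (indicator P) + right_diff_norm F W (\<lambda>x. \<psi> x - t * indicator P x)"
proof -
  have "\<bar>\<psi> a - \<psi> b\<bar>
      = t * \<bar>indicator P a - indicator P b\<bar> + \<bar>(\<psi> a - t * indicator P a) - (\<psi> b - t * indicator P b)\<bar>"
    for a b
    using assms(1)[of a] assms(1)[of b] assms(2)[of a] assms(2)[of b] assms(3)
    by (cases "a \<in> P"; cases "b \<in> P") (simp_all add: abs_if)
  then show ?thesis
    unfolding right_diff_norm_def right_diff_def by (simp add: sum.distrib sum_distrib_left)
qed

text \<open>Namioka's trick: peeling off the level sets of \<open>\<psi>\<close> decomposes both sides of the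
  inequality additively, so one of the level sets must satisfy it.\<close>
lemma right_diff_norm_level_set:
  fixes \<psi> :: "'g::group_add \<Rightarrow> real"
  assumes "finite Y" "\<And>x. 0 \<le> \<psi> x" "\<And>x. x \<notin> Y \<Longrightarrow> \<psi> x = 0" "0 < sum \<psi> Y"
    and "right_diff_norm F W \<psi> \<le> e * sum \<psi> Y"
  shows "\<exists>S\<subseteq>Y. S \<noteq> {} \<and> right_diff_norm F W (indicator S) \<le> e * card S"
  using assms(2-)
proof (induction "card {x\<in>Y. 0 < \<psi> x}" arbitrary: \<psi> rule: less_induct)
  case less
  define P where "P = {x\<in>Y. 0 < \<psi> x}"
  have "P \<subseteq> Y" "finite P"
    unfolding P_def using assms(1) by auto
  have outside: "\<psi> x = 0" if "x \<notin> P" for x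
    using that less.prems(1,2)[of x] unfolding P_def by force
  have "P \<noteq> {}"
    using less.prems(3) outside by (auto intro: sum.neutral)
  define t where "t = Min (\<psi> ` P)"
  have "t \<in> \<psi> ` P"
    unfolding t_def using \<open>finite P\<close> \<open>P \<noteq> {}\<close> by simp
  then have "0 < t"
    unfolding P_def by auto
  have t_le: "t \<le> \<psi> x" if "x \<in> P" for x
    unfolding t_def using \<open>finite P\<close> that by simp
  define \<psi>' where "\<psi>' x = \<psi> x - t * indicator P x" for x
  have norm_split: "right_diff_norm F W \<psi> = t * right_diff_norm F W (indicator P) + right_diff_norm F W \<psi>'"
    unfolding \<psi>'_def using t_le outside \<open>0 < t\<close> by (intro right_diff_norm_peel_indicator) auto
  have sum_split: "sum \<psi> Y = t * card P + sum \<psi>' Y"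
    unfolding \<psi>'_def using \<open>P \<subseteq> Y\<close> assms(1)
    by (simp add: sum_subtractf sum_distrib_left[symmetric] indicator_def Int_absorb1 flip: sum.inter_restrict)
  show ?case
  proof (cases "right_diff_norm F W (indicator P) \<le> e * card P")
    case True
    then show ?thesis
      using \<open>P \<subseteq> Y\<close> \<open>P \<noteq> {}\<close> by blast
  next
    case False
    then have "t * (e * card P) < t * right_diff_norm F W (indicator P)"
      using \<open>0 < t\<close> by simp
    moreover have "e * sum \<psi> Y = t * (e * card P) + e * sum \<psi>' Y"
      unfolding sum_split by (simp add: algebra_simps)
    ultimately have smaller: "right_diff_norm F W \<psi>' < e * sum \<psi>' Y"
      using less.prems(4) norm_split by linarith
    have nonneg: "0 \<le> \<psi>' x" and zero: "x \<notin> Y \<Longrightarrow> \<psi>' x = 0" for x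
      unfolding \<psi>'_def using t_le outside less.prems(2) \<open>P \<subseteq> Y\<close> by (auto simp: indicator_def)
    have "0 \<le> right_diff_norm F W \<psi>'"
      unfolding right_diff_norm_def by (simp add: sum_nonneg)
    with smaller have "sum \<psi>' Y \<noteq> 0"
      by auto
    then have "0 < sum \<psi>' Y"
      using nonneg by (simp add: less_le sum_nonneg)
    have "{x\<in>Y. 0 < \<psi>' x} \<subset> P"
    proof
      show "{x\<in>Y. 0 < \<psi>' x} \<subseteq> P"
        unfolding \<psi>'_def using outside by (auto simp: indicator_def split: if_splits)
      obtain x where "x \<in> P" "\<psi> x = t"
        using \<open>t \<in> \<psi> ` P\<close> by blast
      then show "{x\<in>Y. 0 < \<psi>' x} \<noteq> P"
        unfolding \<psi>'_def by (force simp: indicator_def)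
    qed
    then have "card {x\<in>Y. 0 < \<psi>' x} < card {x\<in>Y. 0 < \<psi> x}"
      using \<open>finite P\<close> unfolding P_def by (rule psubset_card_mono[rotated])
    from less.hyps[OF this nonneg zero \<open>0 < sum \<psi>' Y\<close> less_imp_le[OF smaller]]
    show ?thesis .
  qed
qed

definition folner_interior :: "'g::group_add set \<Rightarrow> 'g set \<Rightarrow> 'g set" where
  "folner_interior F S = {h\<in>S. \<forall>g\<in>F. h + g \<in> S}"

lemma card_folner_boundary_le_right_diff_norm:
  assumes "finite F" "finite W" "S \<subseteq> W"
  shows "real (card (S - folner_interior F S)) \<le> right_diff_norm F W (indicator S)"
proof -
  have "S - folner_interior F S = (\<Union>g\<in>F. {h\<in>S. h + g \<notin> S})"
    unfolding folner_interior_def by auto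
  then have "real (card (S - folner_interior F S)) \<le> (\<Sum>g\<in>F. real (card {h\<in>S. h + g \<notin> S}))"
    using card_UN_le[OF assms(1), of "\<lambda>g. {h\<in>S. h + g \<notin> S}"] by (simp flip: of_nat_sum)
  also have "\<dots> \<le> (\<Sum>g\<in>F. \<Sum>x\<in>W. \<bar>indicator S (x + g) - indicator S x\<bar>)"
  proof (rule sum_mono)
    fix g
    have "{h\<in>S. h + g \<notin> S} \<subseteq> W"
      using assms(3) by auto
    then have "real (card {h\<in>S. h + g \<notin> S}) = (\<Sum>x\<in>W. indicator {h\<in>S. h + g \<notin> S} x)"
      using assms(2) by (simp add: indicator_def Int_absorb1 flip: sum.inter_restrict)
    also have "\<dots> \<le> (\<Sum>x\<in>W. \<bar>indicator S (x + g) - indicator S x\<bar>)"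
      by (intro sum_mono) (simp add: indicator_def)
    finally show "real (card {h\<in>S. h + g \<notin> S}) \<le> (\<Sum>x\<in>W. \<bar>indicator S (x + g) - indicator S x\<bar>)" .
  qed
  also have "\<dots> = right_diff_norm F W (indicator S)"
    unfolding right_diff_norm_def right_diff_def by (simp add: sum.cartesian_product case_prod_beta)
  finally show ?thesis .
qed

lemma amenable_folner:
  fixes F :: "'g::group_add set" and e :: real
  assumes "amenable_group TYPE('g)" "finite F" "0 < e"
  obtains S where "finite S" "S \<noteq> {}" "(1 - e) * real (card S) \<le> real (card (folner_interior F S))"
proof -
  obtain Y \<phi> where "finite Y" "Y \<noteq> {}" and \<phi>: "\<phi> \<in> prob_weights Y"
    and reiter: "right_diff_norm F (diff_support F Y) \<phi> \<le> e"
    using amenable_reiter[OF assms] .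
  define W where "W = diff_support F Y"
  have "finite W" "Y \<subseteq> W"
    unfolding W_def diff_support_def using \<open>finite Y\<close> assms(2) by auto
  obtain S where "S \<subseteq> Y" "S \<noteq> {}" and S: "right_diff_norm F W (indicator S) \<le> e * card S"
    using right_diff_norm_level_set[OF \<open>finite Y\<close>, of \<phi> F W e] \<phi> reiter
    unfolding prob_weights_def W_def by auto
  then have "finite S"
    using \<open>finite Y\<close> finite_subset by blast
  have "real (card (S - folner_interior F S)) \<le> e * card S"
    using card_folner_boundary_le_right_diff_norm[OF assms(2) \<open>finite W\<close>] \<open>S \<subseteq> Y\<close> \<open>Y \<subseteq> W\<close> S
    by (meson order.trans)
  moreover have "card S = card (folner_interior F S) + card (S - folner_interior F S)"
    using card_Diff_subset[of "folner_interior F S" S] card_mono[of S "folner_interior F S"] \<open>finite S\<close>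
      finite_subset[of "folner_interior F S" S]
    unfolding folner_interior_def by force
  ultimately have "(1 - e) * card S \<le> card (folner_interior F S)"
    by (simp add: algebra_simps)
  with \<open>finite S\<close> \<open>S \<noteq> {}\<close> show ?thesis
    using that by blast
qed

section \<open>Measurability of scalar multiples\<close>

lemma LIMSEQ_floor_grid: "(\<lambda>n. real_of_int \<lfloor>t * real (Suc n)\<rfloor> / real (Suc n)) \<longlonglongrightarrow> t"
proof (rule tendsto_sandwich[of "\<lambda>n. t - inverse (real (Suc n))" _ _ "\<lambda>_. t"])
  have "(t * real (Suc n) - 1) / real (Suc n) \<le> real_of_int \<lfloor>t * real (Suc n)\<rfloor> / real (Suc n)" for n
    by (intro divide_right_mono) linarith+
  then show "\<forall>\<^sub>F n in sequentially. t - inverse (real (Suc n)) \<le> real_of_int \<lfloor>t * real (Suc n)\<rfloor> / real (Suc n)"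
    by (intro always_eventually allI) (simp add: field_simps)
  show "\<forall>\<^sub>F n in sequentially. real_of_int \<lfloor>t * real (Suc n)\<rfloor> / real (Suc n) \<le> t"
    by (intro always_eventually allI) (simp add: divide_le_eq)
  show "(\<lambda>n. t - inverse (real (Suc n))) \<longlonglongrightarrow> t"
    using tendsto_diff[OF tendsto_const LIMSEQ_inverse_real_of_nat, of t] by simp
qed simp

text \<open>The library's borel_measurable_scaleR needs a second countable codomain. Without it, the
  scalar factor is approximated by functions with countably many values, on whose level sets
  the product is a constant multiple of \<open>f\<close>.\<close>
lemma borel_measurable_scaleR_normed:
  fixes f :: "'a \<Rightarrow> 'b::real_normed_vector" and c :: "'a \<Rightarrow> real"
  assumes c[measurable]: "c \<in> borel_measurable M" and f: "f \<in> borel_measurable M"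
  shows "(\<lambda>x. c x *\<^sub>R f x) \<in> borel_measurable M"
proof (rule borel_measurable_LIMSEQ_metric)
  define c' where "c' n x = real_of_int \<lfloor>c x * real (Suc n)\<rfloor> / real (Suc n)" for n x
  show "(\<lambda>n. c' n x *\<^sub>R f x) \<longlonglongrightarrow> c x *\<^sub>R f x" for x
    unfolding c'_def by (intro tendsto_scaleR LIMSEQ_floor_grid tendsto_const)
  show "(\<lambda>x. c' n x *\<^sub>R f x) \<in> borel_measurable M" for n
  proof (rule measurable_piecewise_restrict2)
    define A where "A k = {x \<in> space M. \<lfloor>c x * real (Suc n)\<rfloor> = int_decode k}" for k
    show "A k \<in> sets M" for k
    proof -
      have "A k = {x \<in> space M. real_of_int (int_decode k) \<le> c x * real (Suc n) \<and>
                    c x * real (Suc n) < real_of_int (int_decode k) + 1}"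
        unfolding A_def by (simp add: floor_eq_iff)
      also have "\<dots> \<in> sets M"
        by measurable
      finally show ?thesis .
    qed
    have "x \<in> A (int_encode \<lfloor>c x * real (Suc n)\<rfloor>)" if "x \<in> space M" for x
      unfolding A_def using that by simp
    then show "space M = (\<Union>k. A k)"
      unfolding A_def by blast
    have "(\<lambda>v. a *\<^sub>R v) \<in> borel_measurable (borel :: 'b measure)" for a
      by (intro borel_measurable_continuous_onI continuous_intros)
    from measurable_compose[OF f this]
    have "(\<lambda>x. (real_of_int (int_decode k) / real (Suc n)) *\<^sub>R f x) \<in> borel_measurable M" for k .
    then show "\<exists>h\<in>borel_measurable M. \<forall>x\<in>A k. c' n x *\<^sub>R f x = h x" for k
      unfolding A_def c'_def by fastforce
  qed
qed

section \<open>Nonsingular actions and the Radon-Nikodym cocycle\<close>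

locale nonsingular_action =
  fixes M :: "'x measure" and \<alpha> :: "'g::group_add \<Rightarrow> 'x \<Rightarrow> 'x"
  assumes sigma_finite_M: "sigma_finite_measure M"
    and measurable_action: "\<And>g. \<alpha> g \<in> measurable M M"
    and action_add: "\<And>g h x. x \<in> space M \<Longrightarrow> \<alpha> (g + h) x = \<alpha> g (\<alpha> h x)"
    and action_zero: "\<And>x. x \<in> space M \<Longrightarrow> \<alpha> 0 x = x"
    and null_sets_vimage: "\<And>g N. N \<in> null_sets M \<Longrightarrow> \<alpha> g -` N \<inter> space M \<in> null_sets M"
begin

interpretation sigma_finite_measure M
  by (rule sigma_finite_M)

declare measurable_action[measurable]

abbreviation push :: "'g \<Rightarrow> 'x measure" where
  "push g \<equiv> distr M M (\<alpha> g)"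

lemma action_in_space: "x \<in> space M \<Longrightarrow> \<alpha> g x \<in> space M"
  using measurable_action by (rule measurable_space)

lemma action_neg_cancel: "x \<in> space M \<Longrightarrow> \<alpha> (- g) (\<alpha> g x) = x"
  using action_add[of x "- g" g] action_zero by simp

lemma action_cancel_neg: "x \<in> space M \<Longrightarrow> \<alpha> g (\<alpha> (- g) x) = x"
  using action_add[of x g "- g"] action_zero by simp

lemma action_neg_add: "x \<in> space M \<Longrightarrow> \<alpha> (- (h + g)) x = \<alpha> (- g) (\<alpha> (- h) x)"
  using action_add[of x "- g" "- h"] by (simp add: minus_add)

lemma AE_action:
  assumes "AE y in M. P y"
  shows "AE x in M. P (\<alpha> g x)"
proof -
  obtain N where "N \<in> null_sets M" "{y\<in>space M. \<not> P y} \<subseteq> N"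
    using assms by (auto elim!: AE_E)
  then show ?thesis
    by (intro AE_I'[OF null_sets_vimage[of N g]]) (auto dest: action_in_space)
qed

lemma absolutely_continuous_push: "absolutely_continuous M (push g)"
  unfolding absolutely_continuous_def
proof
  fix N assume "N \<in> null_sets M"
  then show "N \<in> null_sets (push g)"
    using null_sets_vimage[of N g] by (auto simp: null_sets_def emeasure_distr measurable_action)
qed

lemma sigma_finite_push: "sigma_finite_measure (push g)"
proof (rule sigma_finite_measure_distr)
  have "distr (push g) M (\<alpha> (- g)) = distr M M (\<lambda>x. x)"
    by (simp add: distr_distr measurable_action comp_def action_neg_cancel cong: distr_cong)
  then show "sigma_finite_measure (distr (push g) M (\<alpha> (- g)))"
    by (simp add: sigma_finite_M)
qed (simp add: measurable_action)

lemma density_RN_deriv_push: "density M (RN_deriv M (push g)) = push g"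
  by (rule density_RN_deriv[OF absolutely_continuous_push]) simp

lemma nn_integral_RN_deriv_push:
  assumes "G \<in> borel_measurable M"
  shows "(\<integral>\<^sup>+x. RN_deriv M (push g) x * G (\<alpha> (- g) x) \<partial>M) = (\<integral>\<^sup>+x. G x \<partial>M)"
proof -
  have G': "(\<lambda>x. G (\<alpha> (- g) x)) \<in> borel_measurable M"
    using assms by measurable
  have "(\<integral>\<^sup>+x. RN_deriv M (push g) x * G (\<alpha> (- g) x) \<partial>M)
      = integral\<^sup>N (density M (RN_deriv M (push g))) (\<lambda>x. G (\<alpha> (- g) x))"
    using G' by (simp add: nn_integral_density)
  also have "\<dots> = (\<integral>\<^sup>+x. G (\<alpha> (- g) (\<alpha> g x)) \<partial>M)"
    unfolding density_RN_deriv_push using G' by (simp add: nn_integral_distr measurable_action)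
  also have "\<dots> = (\<integral>\<^sup>+x. G x \<partial>M)"
    by (intro nn_integral_cong) (simp add: action_neg_cancel)
  finally show ?thesis .
qed

lemma RN_deriv_push_cocycle:
  "AE x in M. RN_deriv M (push (h + g)) x = RN_deriv M (push h) x * RN_deriv M (push g) (\<alpha> (- h) x)"
proof -
  define f where "f x = RN_deriv M (push h) x * RN_deriv M (push g) (\<alpha> (- h) x)" for x
  have f[measurable]: "f \<in> borel_measurable M"
    unfolding f_def by measurable
  have "density M f = push (h + g)"
  proof (rule measure_eqI)
    fix A assume "A \<in> sets (density M f)"
    then have A[measurable]: "A \<in> sets M"
      by simp
    have "emeasure (density M f) A
        = (\<integral>\<^sup>+x. RN_deriv M (push h) x * (RN_deriv M (push g) (\<alpha> (- h) x) * indicator A (\<alpha> h (\<alpha> (- h) x))) \<partial>M)"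
      by (auto simp: emeasure_density f_def action_cancel_neg mult.assoc intro!: nn_integral_cong)
    also have "\<dots> = (\<integral>\<^sup>+y. RN_deriv M (push g) y * indicator A (\<alpha> h y) \<partial>M)"
      by (rule nn_integral_RN_deriv_push) measurable
    also have "\<dots> = (\<integral>\<^sup>+z. indicator A (\<alpha> h (\<alpha> g z)) \<partial>M)"
      using density_RN_deriv_push[of g]
      by (simp add: nn_integral_density[symmetric] nn_integral_distr measurable_action)
    also have "\<dots> = emeasure (push (h + g)) A"
      by (auto simp: emeasure_distr measurable_action action_add indicator_def
          intro!: nn_integral_cong simp flip: nn_integral_indicator[OF measurable_sets[OF measurable_action A]])
    finally show "emeasure (density M f) A = emeasure (push (h + g)) A" .
  qed simp
  from RN_deriv_unique[OF f this] show ?thesis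
    unfolding f_def by (auto elim: AE_mp)
qed

lemma rho_eq_RN_deriv: "rho M \<alpha> g = (\<lambda>x. enn2real (RN_deriv M (push g) x))"
  unfolding rho_def by simp

lemma borel_measurable_rho[measurable]: "rho M \<alpha> g \<in> borel_measurable M"
  unfolding rho_eq_RN_deriv by measurable

lemma rho_nonneg: "0 \<le> rho M \<alpha> g x"
  unfolding rho_eq_RN_deriv by simp

lemma AE_rho_eq_RN_deriv: "AE x in M. ennreal (rho M \<alpha> g x) = RN_deriv M (push g) x"
  using RN_deriv_finite[OF sigma_finite_push absolutely_continuous_push sets_distr]
  unfolding rho_eq_RN_deriv by eventually_elim (simp add: ennreal_enn2real_if less_top)

lemma rho_cocycle: "AE x in M. rho M \<alpha> (h + g) x = rho M \<alpha> h x * rho M \<alpha> g (\<alpha> (- h) x)"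
  using RN_deriv_push_cocycle[of h g] unfolding rho_eq_RN_deriv
  by eventually_elim (simp add: enn2real_mult)

lemma
  fixes N :: "'x \<Rightarrow> real"
  assumes "integrable M N" "\<And>x. 0 \<le> N x"
  shows integrable_rho_action: "integrable M (\<lambda>x. rho M \<alpha> g x * N (\<alpha> (- g) x))"
    and integral_rho_action: "(\<integral>x. rho M \<alpha> g x * N (\<alpha> (- g) x) \<partial>M) = (\<integral>x. N x \<partial>M)"
proof -
  have N[measurable]: "N \<in> borel_measurable M"
    using assms(1) by auto
  have N': "(\<lambda>x. rho M \<alpha> g x * N (\<alpha> (- g) x)) \<in> borel_measurable M"
    by measurable
  have "(\<integral>\<^sup>+x. ennreal (rho M \<alpha> g x * N (\<alpha> (- g) x)) \<partial>M)
      = (\<integral>\<^sup>+x. RN_deriv M (push g) x * ennreal (N (\<alpha> (- g) x)) \<partial>M)"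
    using AE_rho_eq_RN_deriv[of g]
    by (intro nn_integral_cong_AE) (auto simp: ennreal_mult rho_nonneg assms(2))
  also have "\<dots> = (\<integral>\<^sup>+x. ennreal (N x) \<partial>M)"
    by (rule nn_integral_RN_deriv_push) measurable
  finally have nn: "(\<integral>\<^sup>+x. ennreal (rho M \<alpha> g x * N (\<alpha> (- g) x)) \<partial>M) = (\<integral>\<^sup>+x. ennreal (N x) \<partial>M)" .
  have "(\<integral>\<^sup>+x. ennreal (N x) \<partial>M) < \<infinity>"
    using assms by (simp add: nn_integral_eq_integral less_top[symmetric])
  then show "integrable M (\<lambda>x. rho M \<alpha> g x * N (\<alpha> (- g) x))"
    using N' nn by (intro integrableI_nonneg) (auto simp: rho_nonneg assms(2))
  show "(\<integral>x. rho M \<alpha> g x * N (\<alpha> (- g) x) \<partial>M) = (\<integral>x. N x \<partial>M)"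
    using N' nn by (simp add: integral_eq_nn_integral rho_nonneg assms(2))
qed

end

section \<open>Transference\<close>

lemma Lp_norm_powr: "0 < p \<Longrightarrow> Lp_norm M p f powr p = (\<integral>x. norm (f x) powr p \<partial>M)"
  unfolding Lp_norm_def by (simp add: powr_powr)

lemma lpD_norm_powr: "0 < p \<Longrightarrow> lpD_norm M p \<xi> powr p = (\<Sum>\<^sub>\<infinity>g. Lp_norm M p (\<xi> g) powr p)"
  unfolding lpD_norm_def by (simp add: powr_powr infsum_nonneg)

lemma lpD_norm_nonneg: "0 \<le> lpD_norm M p \<xi>"
  unfolding lpD_norm_def by simp

lemma powr_le_one_iff:
  fixes x q :: real
  assumes "0 \<le> x" "0 < q"
  shows "x powr q \<le> 1 \<longleftrightarrow> x \<le> 1"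
proof
  show "x powr q \<le> 1 \<Longrightarrow> x \<le> 1"
    using powr_less_mono2[OF assms(2), of 1 x] by force
  show "x \<le> 1 \<Longrightarrow> x powr q \<le> 1"
    using assms by (intro powr_le1) auto
qed

lemma Lp_norm_le_one_iff: "0 < p \<Longrightarrow> Lp_norm M p f \<le> 1 \<longleftrightarrow> (\<integral>x. norm (f x) powr p \<partial>M) \<le> 1"
  unfolding Lp_norm_def by (simp add: powr_le_one_iff)

lemma lpD_norm_le_one_iff: "0 < p \<Longrightarrow> lpD_norm M p \<xi> \<le> 1 \<longleftrightarrow> lpD_norm M p \<xi> powr p \<le> 1"
  unfolding lpD_norm_def by (simp add: powr_le_one_iff)

lemma memLp_zero: "0 < p \<Longrightarrow> memLp M p (\<lambda>x. 0)"
  unfolding memLp_def by simp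

lemma Lp_norm_zero: "0 < p \<Longrightarrow> Lp_norm M p (\<lambda>x. 0) = 0"
  unfolding Lp_norm_def by simp

lemma lpD_norm_zero: "0 < p \<Longrightarrow> lpD_norm M p (\<lambda>g x. 0) = 0"
  unfolding lpD_norm_def by (simp add: Lp_norm_zero)

lemma mem_lpD_zero: "0 < p \<Longrightarrow> mem_lpD M p (\<lambda>g x. 0)"
  unfolding mem_lpD_def by (simp add: memLp_zero Lp_norm_zero)

lemma has_sum_sum_fun:
  fixes f :: "'i \<Rightarrow> 'a \<Rightarrow> 'b::topological_comm_monoid_add"
  assumes "finite I" "\<And>i. i \<in> I \<Longrightarrow> (f i has_sum s i) A"
  shows "((\<lambda>x. \<Sum>i\<in>I. f i x) has_sum (\<Sum>i\<in>I. s i)) A"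
  using assms by (induction I rule: finite_induct) (auto intro: has_sum_add)

lemma Max_powr_le_sum:
  fixes n :: "'i \<Rightarrow> real"
  assumes "finite I" "I \<noteq> {}"
  shows "Max (n ` I) powr p \<le> (\<Sum>i\<in>I. n i powr p)"
proof -
  have "Max (n ` I) \<in> n ` I"
    using assms(1,2) by simp
  then obtain i where "i \<in> I" "Max (n ` I) = n i"
    by blast
  then show ?thesis
    using assms(1) by (auto intro: member_le_sum)
qed

definition covariant_op :: "'x measure \<Rightarrow> real \<Rightarrow> ('g::group_add \<Rightarrow> 'x \<Rightarrow> 'x) \<Rightarrow> 'g set \<Rightarrow>
    ('g \<Rightarrow> 'x \<Rightarrow> ('e::real_normed_vector \<Rightarrow>\<^sub>L 'e)) \<Rightarrow> ('x \<Rightarrow> 'e) \<Rightarrow> 'x \<Rightarrow> 'e" where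
  "covariant_op M p \<alpha> F a f x = (\<Sum>g\<in>F. Mop (a g) (Top M p \<alpha> g f) x)"

definition regular_op :: "('g::group_add \<Rightarrow> 'x \<Rightarrow> 'x) \<Rightarrow> 'g set \<Rightarrow>
    ('g \<Rightarrow> 'x \<Rightarrow> ('e::real_normed_vector \<Rightarrow>\<^sub>L 'e)) \<Rightarrow> ('g \<Rightarrow> 'x \<Rightarrow> 'e) \<Rightarrow> 'g \<Rightarrow> 'x \<Rightarrow> 'e" where
  "regular_op \<alpha> F a \<xi> h x = (\<Sum>g\<in>F. bar_op \<alpha> (a g) (Vop g \<xi>) h x)"

lemma regular_op_apply: "regular_op \<alpha> F a \<xi> h x = (\<Sum>g\<in>F. a g (\<alpha> (- h) x) (\<xi> (h + g) x))"
  unfolding regular_op_def bar_op_def Mop_def Vop_def by simp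

text \<open>The vector xi of the transference argument, cut off on a null set Z so that the cocycle
  identity for rho, which only holds almost everywhere, holds at every remaining point.\<close>
definition transfer_vector :: "'x measure \<Rightarrow> real \<Rightarrow> ('g::group_add \<Rightarrow> 'x \<Rightarrow> 'x) \<Rightarrow> 'g set \<Rightarrow> 'x set \<Rightarrow>
    ('x \<Rightarrow> 'e::real_normed_vector) \<Rightarrow> 'g \<Rightarrow> 'x \<Rightarrow> 'e" where
  "transfer_vector M p \<alpha> S Z f k x =
    (if k \<in> S \<and> x \<notin> Z then (1 / real (card S)) powr (1 / p) *\<^sub>R Top M p \<alpha> k f x else 0)"

lemma norm_regular_op_powr_le:
  assumes "finite F" "0 \<le> p" "\<And>g. 0 \<le> C g" "\<And>g. g \<in> F \<Longrightarrow> norm (a g (\<alpha> (- h) x)) \<le> C g"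
  shows "norm (regular_op \<alpha> F a \<xi> h x) powr p \<le> (\<Sum>g\<in>F. C g) powr p * (\<Sum>g\<in>F. norm (\<xi> (h + g) x) powr p)"
proof (cases "F = {}")
  case False
  define n where "n g = norm (\<xi> (h + g) x)" for g
  have "norm (regular_op \<alpha> F a \<xi> h x) \<le> (\<Sum>g\<in>F. norm (a g (\<alpha> (- h) x)) * n g)"
    unfolding regular_op_apply n_def by (intro order.trans[OF norm_sum] sum_mono norm_blinfun)
  also have "\<dots> \<le> (\<Sum>g\<in>F. C g * Max (n ` F))"
    using assms(1,3,4) by (intro sum_mono mult_mono) (auto simp: n_def)
  also have "\<dots> = (\<Sum>g\<in>F. C g) * Max (n ` F)"
    by (simp add: sum_distrib_right)
  finally have "norm (regular_op \<alpha> F a \<xi> h x) powr p \<le> ((\<Sum>g\<in>F. C g) * Max (n ` F)) powr p"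
    using assms(2) by (intro powr_mono2) auto
  also have "\<dots> = (\<Sum>g\<in>F. C g) powr p * Max (n ` F) powr p"
    by (rule powr_mult)
  also have "\<dots> \<le> (\<Sum>g\<in>F. C g) powr p * (\<Sum>g\<in>F. n g powr p)"
    using Max_powr_le_sum[OF assms(1) False] by (intro mult_left_mono) auto
  finally show ?thesis
    unfolding n_def .
qed (simp add: regular_op_apply)

locale nonsingular_Lp_action = nonsingular_action M \<alpha> for M :: "'x measure" and \<alpha> :: "'g::group_add \<Rightarrow> 'x \<Rightarrow> 'x" +
  fixes p :: real
  assumes p_pos: "0 < p"
begin

lemma norm_Top_powr: "norm (Top M p \<alpha> g f x) powr p = rho M \<alpha> g x * norm (f (\<alpha> (- g) x)) powr p"
  unfolding Top_def using p_pos by (simp add: powr_mult powr_powr rho_nonneg)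

lemma norm_transfer_vector_powr:
  "norm (transfer_vector M p \<alpha> S Z f k x) powr p
    = (if k \<in> S \<and> x \<notin> Z then (1 / real (card S)) * (rho M \<alpha> k x * norm (f (\<alpha> (- k) x)) powr p) else 0)"
  unfolding transfer_vector_def using p_pos by (simp add: powr_mult powr_powr norm_Top_powr)

lemma
  fixes N :: "'x \<Rightarrow> real"
  assumes "integrable M N" "\<And>x. 0 \<le> N x" "Z \<in> null_sets M"
  shows integrable_rho_action_off_null:
      "integrable M (\<lambda>x. if x \<in> Z then 0 else rho M \<alpha> g x * N (\<alpha> (- g) x))"
    and integral_rho_action_off_null:
      "(\<integral>x. (if x \<in> Z then 0 else rho M \<alpha> g x * N (\<alpha> (- g) x)) \<partial>M) = (\<integral>x. N x \<partial>M)"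
proof -
  have AE: "AE x in M. rho M \<alpha> g x * N (\<alpha> (- g) x) = (if x \<in> Z then 0 else rho M \<alpha> g x * N (\<alpha> (- g) x))"
    using AE_not_in[OF assms(3)] by eventually_elim simp
  have [measurable]: "Z \<in> sets M" "N \<in> borel_measurable M"
    using assms(1,3) by auto
  show "integrable M (\<lambda>x. if x \<in> Z then 0 else rho M \<alpha> g x * N (\<alpha> (- g) x))"
    using integrable_rho_action[OF assms(1,2)] by (rule integrable_cong_AE_imp) (measurable, fact AE)
  have "(\<integral>x. rho M \<alpha> g x * N (\<alpha> (- g) x) \<partial>M) = (\<integral>x. (if x \<in> Z then 0 else rho M \<alpha> g x * N (\<alpha> (- g) x)) \<partial>M)"
    by (rule integral_cong_AE) (measurable, fact AE)
  then show "(\<integral>x. (if x \<in> Z then 0 else rho M \<alpha> g x * N (\<alpha> (- g) x)) \<partial>M) = (\<integral>x. N x \<partial>M)"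
    using integral_rho_action[OF assms(1,2)] by simp
qed

lemma borel_measurable_Top:
  assumes "f \<in> borel_measurable M"
  shows "Top M p \<alpha> k f \<in> borel_measurable M"
  unfolding Top_def
  using measurable_compose[OF measurable_action assms] by (intro borel_measurable_scaleR_normed) measurable

lemma borel_measurable_transfer_vector:
  assumes "f \<in> borel_measurable M" "Z \<in> sets M"
  shows "transfer_vector M p \<alpha> S Z f k \<in> borel_measurable M"
proof -
  have "transfer_vector M p \<alpha> S Z f k
      = (\<lambda>x. (if k \<in> S \<and> x \<notin> Z then (1 / real (card S)) powr (1 / p) else 0) *\<^sub>R Top M p \<alpha> k f x)"
    unfolding transfer_vector_def by auto
  also have "\<dots> \<in> borel_measurable M"
  proof (rule borel_measurable_scaleR_normed[OF _ borel_measurable_Top[OF assms(1)]])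
    show "(\<lambda>x. if k \<in> S \<and> x \<notin> Z then (1 / real (card S)) powr (1 / p) else 0) \<in> borel_measurable M"
      using assms(2) by measurable
  qed
  finally show ?thesis .
qed

lemma
  assumes "memLp M p f" "Z \<in> null_sets M" "k \<in> S"
  shows integrable_norm_transfer_vector_powr:
      "integrable M (\<lambda>x. norm (transfer_vector M p \<alpha> S Z f k x) powr p)"
    and integral_norm_transfer_vector_powr:
      "(\<integral>x. norm (transfer_vector M p \<alpha> S Z f k x) powr p \<partial>M)
        = (1 / real (card S)) * (\<integral>x. norm (f x) powr p \<partial>M)"
proof -
  have "integrable M (\<lambda>x. norm (f x) powr p)"
    using assms(1) unfolding memLp_def by simp
  note off_null = integrable_rho_action_off_null[OF this _ assms(2)] integral_rho_action_off_null[OF this _ assms(2)]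
  have eq: "norm (transfer_vector M p \<alpha> S Z f k x) powr p
      = (1 / real (card S)) * (if x \<in> Z then 0 else rho M \<alpha> k x * norm (f (\<alpha> (- k) x)) powr p)" for x
    unfolding norm_transfer_vector_powr using assms(3) by simp
  show "integrable M (\<lambda>x. norm (transfer_vector M p \<alpha> S Z f k x) powr p)"
    unfolding eq using off_null(1) by simp
  show "(\<integral>x. norm (transfer_vector M p \<alpha> S Z f k x) powr p \<partial>M)
      = (1 / real (card S)) * (\<integral>x. norm (f x) powr p \<partial>M)"
    unfolding eq using off_null(2) by simp
qed

lemma
  assumes "memLp M p f" "Z \<in> null_sets M" "finite S" "S \<noteq> {}"
  shows mem_lpD_transfer_vector: "mem_lpD M p (transfer_vector M p \<alpha> S Z f)"
    and lpD_norm_transfer_vector_powr: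
      "lpD_norm M p (transfer_vector M p \<alpha> S Z f) powr p = (\<integral>x. norm (f x) powr p \<partial>M)"
proof -
  have outside: "transfer_vector M p \<alpha> S Z f k = (\<lambda>x. 0)" if "k \<notin> S" for k
    using that unfolding transfer_vector_def by (simp add: fun_eq_iff)
  have "f \<in> borel_measurable M" "Z \<in> sets M"
    using assms(1,2) unfolding memLp_def by auto
  then have "memLp M p (transfer_vector M p \<alpha> S Z f k)" for k
  proof (cases "k \<in> S")
    case True
    then show ?thesis
      unfolding memLp_def
      using integrable_norm_transfer_vector_powr[OF assms(1,2)] borel_measurable_transfer_vector
        \<open>f \<in> borel_measurable M\<close> \<open>Z \<in> sets M\<close> by blast
  qed (simp add: outside memLp_zero p_pos)
  moreover have norms: "Lp_norm M p (transfer_vector M p \<alpha> S Z f k) powr p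
      = (if k \<in> S then (1 / real (card S)) * (\<integral>x. norm (f x) powr p \<partial>M) else 0)" for k
  proof (cases "k \<in> S")
    case True
    then show ?thesis
      using integral_norm_transfer_vector_powr[OF assms(1,2)] by (simp add: Lp_norm_powr[OF p_pos])
  qed (simp add: outside Lp_norm_zero p_pos)
  moreover have "((\<lambda>k. Lp_norm M p (transfer_vector M p \<alpha> S Z f k) powr p)
      has_sum (\<integral>x. norm (f x) powr p \<partial>M)) UNIV"
    unfolding norms using assms(3,4) by (intro has_sum_finite_neutralI[of S]) auto
  ultimately show "mem_lpD M p (transfer_vector M p \<alpha> S Z f)"
    and "lpD_norm M p (transfer_vector M p \<alpha> S Z f) powr p = (\<integral>x. norm (f x) powr p \<partial>M)"
    unfolding mem_lpD_def lpD_norm_powr[OF p_pos] by (auto simp: has_sum_iff)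
qed

lemma Top_add_apply:
  assumes "x \<in> space M" "rho M \<alpha> (h + g) x = rho M \<alpha> h x * rho M \<alpha> g (\<alpha> (- h) x)"
  shows "Top M p \<alpha> (h + g) f x = Top M p \<alpha> h (Top M p \<alpha> g f) x"
  unfolding Top_def using assms by (simp add: action_neg_add powr_mult rho_nonneg)

lemma Top_covariant_op_apply:
  "Top M p \<alpha> h (covariant_op M p \<alpha> F a f) x = (\<Sum>g\<in>F. a g (\<alpha> (- h) x) (Top M p \<alpha> h (Top M p \<alpha> g f) x))"
  unfolding covariant_op_def Mop_def Top_def by (simp add: scaleR_sum_right blinfun.scaleR_right)

lemma regular_op_transfer_vector_interior:
  assumes "x \<in> space M" "h \<in> folner_interior F S"
    and cocycle: "x \<notin> Z \<Longrightarrow> \<forall>g\<in>F. rho M \<alpha> (h + g) x = rho M \<alpha> h x * rho M \<alpha> g (\<alpha> (- h) x)"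
  shows "regular_op \<alpha> F a (transfer_vector M p \<alpha> S Z f) h x
    = (if x \<in> Z then 0 else (1 / real (card S)) powr (1 / p)) *\<^sub>R Top M p \<alpha> h (covariant_op M p \<alpha> F a f) x"
proof (cases "x \<in> Z")
  case False
  have "h + g \<in> S" if "g \<in> F" for g
    using assms(2) that unfolding folner_interior_def by blast
  moreover have "rho M \<alpha> (h + g) x = rho M \<alpha> h x * rho M \<alpha> g (\<alpha> (- h) x)" if "g \<in> F" for g
    using cocycle[OF False] that by blast
  ultimately show ?thesis
    unfolding regular_op_apply Top_covariant_op_apply transfer_vector_def
    using False by (simp add: scaleR_sum_right blinfun.scaleR_right Top_add_apply[OF assms(1)] cong: sum.cong)
qed (simp add: regular_op_apply transfer_vector_def)

lemma regular_op_transfer_vector_vanishes: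
  "(\<forall>g\<in>F. h + g \<notin> S) \<Longrightarrow> regular_op \<alpha> F a (transfer_vector M p \<alpha> S Z f) h = (\<lambda>x. 0)"
  unfolding regular_op_apply[abs_def] transfer_vector_def by simp

lemma obtain_cocycle_null_set:
  assumes "finite S" "finite F"
  obtains Z where "Z \<in> null_sets M"
    "\<And>x h g. x \<in> space M \<Longrightarrow> x \<notin> Z \<Longrightarrow> h \<in> S \<Longrightarrow> g \<in> F \<Longrightarrow>
      rho M \<alpha> (h + g) x = rho M \<alpha> h x * rho M \<alpha> g (\<alpha> (- h) x)"
proof -
  have "AE x in M. \<forall>(h, g)\<in>S \<times> F. rho M \<alpha> (h + g) x = rho M \<alpha> h x * rho M \<alpha> g (\<alpha> (- h) x)"
    using assms by (subst AE_finite_all) (auto intro: rho_cocycle)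
  then obtain Z where "{x\<in>space M. \<not> (\<forall>(h, g)\<in>S \<times> F. rho M \<alpha> (h + g) x = rho M \<alpha> h x * rho M \<alpha> g (\<alpha> (- h) x))} \<subseteq> Z"
      "Z \<in> null_sets M"
    by (auto elim!: AE_E)
  then show ?thesis
    by (intro that[of Z]) auto
qed

lemma Lp_norm_regular_op_transfer_vector_interior:
  assumes "integrable M (\<lambda>x. norm (covariant_op M p \<alpha> F a f x) powr p)" "Z \<in> null_sets M"
    and "h \<in> folner_interior F S"
    and cocycle: "\<And>x g. x \<in> space M \<Longrightarrow> x \<notin> Z \<Longrightarrow> g \<in> F \<Longrightarrow>
      rho M \<alpha> (h + g) x = rho M \<alpha> h x * rho M \<alpha> g (\<alpha> (- h) x)"
  shows "Lp_norm M p (regular_op \<alpha> F a (transfer_vector M p \<alpha> S Z f) h) powr p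
    = (1 / real (card S)) * (\<integral>x. norm (covariant_op M p \<alpha> F a f x) powr p \<partial>M)"
proof -
  define N where "N x = norm (covariant_op M p \<alpha> F a f x) powr p" for x
  have "norm (regular_op \<alpha> F a (transfer_vector M p \<alpha> S Z f) h x) powr p
      = (1 / real (card S)) * (if x \<in> Z then 0 else rho M \<alpha> h x * N (\<alpha> (- h) x))"
    if "x \<in> space M" for x
  proof -
    have "regular_op \<alpha> F a (transfer_vector M p \<alpha> S Z f) h x
        = (if x \<in> Z then 0 else (1 / real (card S)) powr (1 / p)) *\<^sub>R Top M p \<alpha> h (covariant_op M p \<alpha> F a f) x"
      using regular_op_transfer_vector_interior[OF that assms(3)] cocycle[OF that] by blast
    then show ?thesis
      using p_pos by (simp add: norm_Top_powr powr_mult powr_powr N_def)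
  qed
  then have "Lp_norm M p (regular_op \<alpha> F a (transfer_vector M p \<alpha> S Z f) h) powr p
      = (\<integral>x. (1 / real (card S)) * (if x \<in> Z then 0 else rho M \<alpha> h x * N (\<alpha> (- h) x)) \<partial>M)"
    unfolding Lp_norm_powr[OF p_pos] by (rule Bochner_Integration.integral_cong[OF refl])
  also have "\<dots> = (1 / real (card S)) * (\<integral>x. N x \<partial>M)"
    using integral_rho_action_off_null[OF assms(1)[folded N_def] _ assms(2)] by (simp add: N_def)
  finally show ?thesis
    unfolding N_def .
qed

lemma lpD_norm_regular_op_transfer_vector_ge:
  assumes "integrable M (\<lambda>x. norm (covariant_op M p \<alpha> F a f x) powr p)"
    and "finite F" "finite S" "Z \<in> null_sets M"
    and cocycle: "\<And>x h g. x \<in> space M \<Longrightarrow> x \<notin> Z \<Longrightarrow> h \<in> S \<Longrightarrow> g \<in> F \<Longrightarrow>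
      rho M \<alpha> (h + g) x = rho M \<alpha> h x * rho M \<alpha> g (\<alpha> (- h) x)"
  shows "real (card (folner_interior F S)) / real (card S) * (\<integral>x. norm (covariant_op M p \<alpha> F a f x) powr p \<partial>M)
    \<le> lpD_norm M p (regular_op \<alpha> F a (transfer_vector M p \<alpha> S Z f)) powr p"
proof -
  define L where "L h = Lp_norm M p (regular_op \<alpha> F a (transfer_vector M p \<alpha> S Z f) h) powr p" for h
  have "folner_interior F S \<subseteq> S" "S \<subseteq> diff_support F S"
    unfolding folner_interior_def diff_support_def by auto
  have "L h = 0" if "h \<notin> diff_support F S" for h
  proof -
    have "\<forall>g\<in>F. h + g \<notin> S"
      using that unfolding diff_support_def by (force simp: image_iff add.assoc)
    then show ?thesis
      unfolding L_def by (simp add: regular_op_transfer_vector_vanishes Lp_norm_zero p_pos)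
  qed
  then have "lpD_norm M p (regular_op \<alpha> F a (transfer_vector M p \<alpha> S Z f)) powr p = sum L (diff_support F S)"
    unfolding lpD_norm_powr[OF p_pos] L_def[symmetric]
    by (intro infsumI has_sum_finite_neutralI) (auto simp: finite_diff_support assms(2,3))
  also have "\<dots> \<ge> sum L (folner_interior F S)"
    using \<open>folner_interior F S \<subseteq> S\<close> \<open>S \<subseteq> diff_support F S\<close> finite_diff_support[OF assms(2,3)]
    by (intro sum_mono2) (auto simp: L_def)
  also have "sum L (folner_interior F S)
      = real (card (folner_interior F S)) * ((1 / real (card S)) * (\<integral>x. norm (covariant_op M p \<alpha> F a f x) powr p \<partial>M))"
    unfolding L_def
    using Lp_norm_regular_op_transfer_vector_interior[OF assms(1,4)] cocycle \<open>folner_interior F S \<subseteq> S\<close>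
    by (simp add: subset_iff)
  finally show ?thesis
    by simp
qed

lemma Lp_norm_regular_op_powr_le:
  assumes "finite F" "mem_lpD M p \<xi>" "\<And>g. 0 \<le> C g" "\<And>g. g \<in> F \<Longrightarrow> AE x in M. norm (a g x) \<le> C g"
  shows "Lp_norm M p (regular_op \<alpha> F a \<xi> h) powr p
    \<le> (\<Sum>g\<in>F. C g) powr p * (\<Sum>g\<in>F. Lp_norm M p (\<xi> (h + g)) powr p)"
proof (cases "integrable M (\<lambda>x. norm (regular_op \<alpha> F a \<xi> h x) powr p)")
  case True
  have int: "integrable M (\<lambda>x. norm (\<xi> k x) powr p)" for k
    using assms(2) unfolding mem_lpD_def memLp_def by simp
  have "AE x in M. \<forall>g\<in>F. norm (a g (\<alpha> (- h) x)) \<le> C g"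
    using assms(1,4) by (subst AE_finite_all) (auto intro: AE_action)
  then have "AE x in M. norm (regular_op \<alpha> F a \<xi> h x) powr p
      \<le> (\<Sum>g\<in>F. C g) powr p * (\<Sum>g\<in>F. norm (\<xi> (h + g) x) powr p)"
    by eventually_elim (use assms(1,3) p_pos in \<open>auto intro: norm_regular_op_powr_le\<close>)
  then have "(\<integral>x. norm (regular_op \<alpha> F a \<xi> h x) powr p \<partial>M)
      \<le> (\<integral>x. (\<Sum>g\<in>F. C g) powr p * (\<Sum>g\<in>F. norm (\<xi> (h + g) x) powr p) \<partial>M)"
    using True int by (intro integral_mono_AE) auto
  then show ?thesis
    using int by (simp add: Lp_norm_powr[OF p_pos] integral_sum)
next
  case False
  then show ?thesis
    by (simp add: Lp_norm_powr[OF p_pos] not_integrable_integral_eq sum_nonneg)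
qed

lemma lpD_norm_regular_op_powr_le:
  assumes "finite F" "mem_lpD M p \<xi>" "\<And>g. 0 \<le> C g" "\<And>g. g \<in> F \<Longrightarrow> AE x in M. norm (a g x) \<le> C g"
  shows "lpD_norm M p (regular_op \<alpha> F a \<xi>) powr p \<le> (\<Sum>g\<in>F. C g) powr p * card F * lpD_norm M p \<xi> powr p"
proof -
  define L where "L k = Lp_norm M p (\<xi> k) powr p" for k
  have "L summable_on UNIV"
    using assms(2) unfolding mem_lpD_def L_def by simp
  then have "((\<lambda>h. L (h + g)) has_sum infsum L UNIV) UNIV" for g
    using has_sum_reindex_bij_betw[OF bij_plus_right, of L] by simp
  then have "((\<lambda>h. \<Sum>g\<in>F. L (h + g)) has_sum (\<Sum>g\<in>F. infsum L UNIV)) UNIV"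
    by (intro has_sum_sum_fun[OF assms(1)])
  then have shifted: "((\<lambda>h. (\<Sum>g\<in>F. C g) powr p * (\<Sum>g\<in>F. L (h + g)))
      has_sum ((\<Sum>g\<in>F. C g) powr p * (card F * infsum L UNIV))) UNIV"
    by (intro has_sum_cmult_right) simp
  have "infsum (\<lambda>h. Lp_norm M p (regular_op \<alpha> F a \<xi> h) powr p) UNIV
      \<le> (\<Sum>g\<in>F. C g) powr p * (card F * infsum L UNIV)"
  proof (cases "(\<lambda>h. Lp_norm M p (regular_op \<alpha> F a \<xi> h) powr p) summable_on UNIV")
    case True
    show ?thesis
      by (rule has_sum_mono[OF has_sum_infsum[OF True] shifted])
        (simp add: L_def Lp_norm_regular_op_powr_le[OF assms])
  next
    case False
    then show ?thesis
      by (simp add: infsum_not_exists infsum_nonneg L_def)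
  qed
  then show ?thesis
    unfolding lpD_norm_powr[OF p_pos] L_def by (simp add: mult.assoc)
qed

lemma bdd_above_regular_op_unit_ball:
  assumes "finite F" "\<And>g. g \<in> F \<Longrightarrow> Linfty M (a g)"
  shows "bdd_above ((\<lambda>\<xi>. lpD_norm M p (regular_op \<alpha> F a \<xi>)) ` {\<xi>. mem_lpD M p \<xi> \<and> lpD_norm M p \<xi> \<le> 1})"
proof -
  have "\<forall>g\<in>F. \<exists>C. AE x in M. norm (a g x) \<le> C"
    using assms(2) unfolding Linfty_def by blast
  then obtain C where C: "\<And>g. g \<in> F \<Longrightarrow> AE x in M. norm (a g x) \<le> C g"
    by metis
  have bound: "AE x in M. norm (a g x) \<le> max 0 (C g)" if "g \<in> F" for g
    using C[OF that] by eventually_elim simp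
  define K where "K = (\<Sum>g\<in>F. max 0 (C g)) powr p * card F"
  have "lpD_norm M p (regular_op \<alpha> F a \<xi>) \<le> K powr (1 / p)"
    if "mem_lpD M p \<xi>" "lpD_norm M p \<xi> \<le> 1" for \<xi>
  proof -
    have "lpD_norm M p (regular_op \<alpha> F a \<xi>) powr p \<le> K * lpD_norm M p \<xi> powr p"
      unfolding K_def using lpD_norm_regular_op_powr_le[OF assms(1) that(1) _ bound] by simp
    also have "\<dots> \<le> K"
      using that(2) p_pos by (simp add: K_def lpD_norm_le_one_iff mult_left_le)
    finally have "(lpD_norm M p (regular_op \<alpha> F a \<xi>) powr p) powr (1 / p) \<le> K powr (1 / p)"
      using p_pos by (intro powr_mono2) auto
    then show ?thesis
      using p_pos by (simp add: powr_powr lpD_norm_nonneg)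
  qed
  then show ?thesis
    by (intro bdd_aboveI) auto
qed

lemma lpD_norm_regular_op_le_opnorm:
  assumes "finite F" "\<And>g. g \<in> F \<Longrightarrow> Linfty M (a g)" "mem_lpD M p \<xi>" "lpD_norm M p \<xi> \<le> 1"
  shows "lpD_norm M p (regular_op \<alpha> F a \<xi>) \<le> lpD_opnorm M p (regular_op \<alpha> F a)"
  unfolding lpD_opnorm_def using bdd_above_regular_op_unit_ball[OF assms(1,2)] assms(3,4)
  by (intro cSUP_upper) auto

lemma folner_fraction_le_regular_op_opnorm:
  assumes "finite F" "\<And>g. g \<in> F \<Longrightarrow> Linfty M (a g)" "memLp M p f" "Lp_norm M p f \<le> 1"
    and "integrable M (\<lambda>x. norm (covariant_op M p \<alpha> F a f x) powr p)" "finite S" "S \<noteq> {}"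
  shows "real (card (folner_interior F S)) / real (card S) * (\<integral>x. norm (covariant_op M p \<alpha> F a f x) powr p \<partial>M)
    \<le> lpD_opnorm M p (regular_op \<alpha> F a) powr p"
proof -
  obtain Z where "Z \<in> null_sets M" and cocycle: "\<And>x h g. x \<in> space M \<Longrightarrow> x \<notin> Z \<Longrightarrow> h \<in> S \<Longrightarrow> g \<in> F \<Longrightarrow>
      rho M \<alpha> (h + g) x = rho M \<alpha> h x * rho M \<alpha> g (\<alpha> (- h) x)"
    using obtain_cocycle_null_set[OF assms(6,1)] by blast
  note transfer = mem_lpD_transfer_vector[OF assms(3) \<open>Z \<in> null_sets M\<close> assms(6,7)]
    lpD_norm_transfer_vector_powr[OF assms(3) \<open>Z \<in> null_sets M\<close> assms(6,7)]
  have "lpD_norm M p (transfer_vector M p \<alpha> S Z f) \<le> 1"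
    using transfer(2) assms(4) p_pos by (simp add: lpD_norm_le_one_iff Lp_norm_le_one_iff)
  have "real (card (folner_interior F S)) / real (card S) * (\<integral>x. norm (covariant_op M p \<alpha> F a f x) powr p \<partial>M)
      \<le> lpD_norm M p (regular_op \<alpha> F a (transfer_vector M p \<alpha> S Z f)) powr p"
    by (rule lpD_norm_regular_op_transfer_vector_ge[OF assms(5,1,6) \<open>Z \<in> null_sets M\<close> cocycle])
  also have "\<dots> \<le> lpD_opnorm M p (regular_op \<alpha> F a) powr p"
    using lpD_norm_regular_op_le_opnorm[OF assms(1,2) transfer(1) \<open>lpD_norm M p (transfer_vector M p \<alpha> S Z f) \<le> 1\<close>]
      p_pos by (intro powr_mono2) (auto simp: lpD_norm_nonneg)
  finally show ?thesis .
qed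

lemma Lp_norm_covariant_op_le_regular_op_norm:
  assumes "amenable_group TYPE('g)" "finite F" "\<And>g. g \<in> F \<Longrightarrow> Linfty M (a g)"
    and "memLp M p f" "Lp_norm M p f \<le> 1"
  shows "Lp_norm M p (covariant_op M p \<alpha> F a f) \<le> lpD_opnorm M p (regular_op \<alpha> F a)"
proof -
  define R where "R = lpD_opnorm M p (regular_op \<alpha> F a)"
  have "0 \<le> R"
    using order.trans[OF lpD_norm_nonneg lpD_norm_regular_op_le_opnorm[OF assms(2,3) mem_lpD_zero]] p_pos
    by (simp add: lpD_norm_zero R_def)
  define I where "I = (\<integral>x. norm (covariant_op M p \<alpha> F a f x) powr p \<partial>M)"
  have "I \<le> R powr p"
  proof (cases "integrable M (\<lambda>x. norm (covariant_op M p \<alpha> F a f x) powr p)")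
    case True
    show ?thesis
    proof (rule field_le_mult_one_interval)
      fix z :: real assume "0 < z" "z < 1"
      obtain S where "finite S" "S \<noteq> {}" and "z * card S \<le> card (folner_interior F S)"
        using amenable_folner[OF assms(1,2), of "1 - z"] \<open>z < 1\<close> by auto
      then have "z \<le> card (folner_interior F S) / card S"
        by (simp add: le_divide_eq card_gt_0_iff)
      then have "z * I \<le> card (folner_interior F S) / card S * I"
        unfolding I_def by (intro mult_right_mono) auto
      also have "\<dots> \<le> R powr p"
        unfolding I_def R_def
        by (rule folner_fraction_le_regular_op_opnorm[OF assms(2-5) True \<open>finite S\<close> \<open>S \<noteq> {}\<close>])
      finally show "z * I \<le> R powr p" .
    qed
  qed (simp add: I_def not_integrable_integral_eq)
  then have "I powr (1 / p) \<le> (R powr p) powr (1 / p)"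
    using p_pos by (intro powr_mono2) (auto simp: I_def)
  then show ?thesis
    using \<open>0 \<le> R\<close> p_pos by (simp add: Lp_norm_def I_def R_def powr_powr)
qed

lemma Lp_opnorm_covariant_op_le_regular_op:
  fixes a :: "'g \<Rightarrow> 'x \<Rightarrow> ('e::real_normed_vector \<Rightarrow>\<^sub>L 'e)"
  assumes "amenable_group TYPE('g)" "finite F" "\<And>g. g \<in> F \<Longrightarrow> Linfty M (a g)"
  shows "Lp_opnorm M p (covariant_op M p \<alpha> F a) \<le> lpD_opnorm M p (regular_op \<alpha> F a)"
  unfolding Lp_opnorm_def
proof (rule cSUP_least)
  have "(\<lambda>x. 0) \<in> {f :: 'x \<Rightarrow> 'e. memLp M p f \<and> Lp_norm M p f \<le> 1}"
    using p_pos by (simp add: memLp_zero Lp_norm_zero)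
  then show "{f :: 'x \<Rightarrow> 'e. memLp M p f \<and> Lp_norm M p f \<le> 1} \<noteq> {}"
    by blast
next
  fix f :: "'x \<Rightarrow> 'e"
  assume "f \<in> {f. memLp M p f \<and> Lp_norm M p f \<le> 1}"
  then show "Lp_norm M p (covariant_op M p \<alpha> F a f) \<le> lpD_opnorm M p (regular_op \<alpha> F a)"
    by (intro Lp_norm_covariant_op_le_regular_op_norm[OF assms]) auto
qed

end

theorem lemma3p3:
  fixes M :: "'x measure" and p :: real
    and \<alpha> :: "'g::group_add \<Rightarrow> 'x \<Rightarrow> 'x"
    and F :: "'g set" and a :: "'g \<Rightarrow> 'x \<Rightarrow> ('e::banach \<Rightarrow>\<^sub>L 'e)"
  assumes "sigma_finite_measure M"
    and "1 < p"
    and "\<And>g. \<alpha> g \<in> measurable M M"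
    and "\<And>g h x. x \<in> space M \<Longrightarrow> \<alpha> (g + h) x = \<alpha> g (\<alpha> h x)"
    and "\<And>x. x \<in> space M \<Longrightarrow> \<alpha> 0 x = x"
    and "\<And>g N. N \<in> null_sets M \<Longrightarrow> \<alpha> g -` N \<inter> space M \<in> null_sets M"
    and "amenable_group TYPE('g)"
    and "finite F"
    and "\<And>g. g \<in> F \<Longrightarrow> Linfty M (a g)"
  shows "Lp_opnorm M p (\<lambda>f x. \<Sum>g\<in>F. Mop (a g) (Top M p \<alpha> g f) x)
         \<le> lpD_opnorm M p (\<lambda>\<xi> h x. \<Sum>g\<in>F. bar_op \<alpha> (a g) (Vop g \<xi>) h x)"
proof -
  have "nonsingular_action M \<alpha>"
    by (rule nonsingular_action.intro) (fact assms)+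
  then interpret nonsingular_Lp_action M \<alpha> p
    using assms(2) by (intro nonsingular_Lp_action.intro nonsingular_Lp_action_axioms.intro) auto
  have "(\<lambda>f x. \<Sum>g\<in>F. Mop (a g) (Top M p \<alpha> g f) x) = covariant_op M p \<alpha> F a"
    and "(\<lambda>\<xi> h x. \<Sum>g\<in>F. bar_op \<alpha> (a g) (Vop g \<xi>) h x) = regular_op \<alpha> F a"
    by (simp_all add: fun_eq_iff covariant_op_def regular_op_def)
  then show ?thesis
    using Lp_opnorm_covariant_op_le_regular_op[OF assms(7-9)] by simp
qed

end
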